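(* Let $\{\mathcal X^\varepsilon\}$ be a $C^m$-Markov perturbation ($m\ge1$) of a synchronized DRN $\mathcal X^0$, and assume $\mu(\Omega^{(\ell-1)}\setminus\Omega^{(\ell)})>0$ for some $1\le\ell\le m$. Then for every $0<\delta<\mu(\Omega^{(\ell-1)}\setminus\Omega^{(\ell)})$ there exist $\varepsilon_\delta>0$, $c_\delta>0$ and $F_\delta:\Omega\to2^{\mathbb N}$ such that for $\mu$-a.e. $\omega\in\Omega$: (i) $\liminf_{n\to\infty}\frac{\#(F_\delta(\omega)\cap\{1,\dots,n\})}{n}>\mu(\Omega^{(\ell-1)}\setminus\Omega^{(\ell)})-\delta$; (ii) for any $0\le\varepsilon<\varepsilon_\delta$ and any two independent copies $\mathcal X,\mathcal Y$ of $\mathcal X^\varepsilon$ started in the fibre $S\times\{\omega\}$, $\mathbb P\{X_n\ne Y_n\mid X_0,Y_0\in S\times\{\omega\}\}\ge\varepsilon^\ell c_\delta$ for all $n\in F_\delta(\omega)$.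
   Context: Let $k\ge2$, $S=\{s_1,\dots,s_k\}$, $\mathbb K=\{1,\dots,k\}$, $e_1,\dots,e_k$ the canonical basis of $\mathbb R^k$; $|\cdot|$ is the $\ell^1$-norm and induced matrix norm; $\Sigma_1^+=\{v\in\mathbb R^k:v_j\ge0,\sum_jv_j=1\}$. $\Theta=(\Omega,\mathcal F,\mu,\theta)$ is an invertible metric dynamical system (standard probability space, $\theta$ invertible, ergodic, $\mu$-preserving). A Markov random network (MRN) over $\Theta$ is a process $(X_n)$ on $S\times\Omega$ with fibrewise measurable, stochastic, Markov transition probabilities; its transition cocycle $P_{\mathcal X}(n,\omega)=(\mathbb P\{X_n=(s_i,\theta^n\omega)\mid X_0=(s_j,\omega)\})_{i,j}$ is column-stochastic, $P_{\mathcal X}(0,\omega)=I_k$, $P_{\mathcal X}(m+n,\omega)=P_{\mathcal X}(m,\theta^n\omega)P_{\mathcal X}(n,\omega)$ for $\mu$-a.e. $\omega$. A DRN is an MRN $\mathcal X^0$ with cocycle $P^0$ having entries in $\{0,1\}$; it is synchronized if there is a measurable $N:\Omega\to\mathbb N$ such that, $\mu$-a.e., all columns of $P^0(n,\omega)$ coincide for $n\ge N(\omega)$. For a synchronized DRN there are $\mathcal F$-measurable $J:\Omega\to\mathbb K$ (synchronization index) and $N^-:\Omega\to\mathbb N$ (a pull-back synchronization time) with $P^0(n,\omega)e_{J(\omega)}=e_{J(\theta^n\omega)}$ for all $n$, and $P^0(n,\theta^{-n}\omega)e_j=e_{J(\omega)}$ for all $j$ and $n\ge N^-(\omega)$, $\mu$-a.e.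 $\omega$. A Markov perturbation of $\mathcal X^0$ is a family $\{\mathcal X^\varepsilon:\varepsilon\ge0\}$ of MRNs with $\mathcal X^\varepsilon=\mathcal X^0$ at $\varepsilon=0$ and $|P_{\mathcal X^\varepsilon}(1,\omega)-P^0(1,\omega)|\le\varepsilon$ for all $\varepsilon$, $\mu$-a.e. $\omega$; it is $C^m$ if for some $\varepsilon_0>0$ and $\mu$-a.e. $\omega$, $\varepsilon\mapsto P_{\mathcal X^\varepsilon}(1,\omega)$ is $C^m$ on $[0,\varepsilon_0]$. Let $P^{(\ell)}(n,\omega)=\frac{d^\ell}{d\varepsilon^\ell}P_{\mathcal X^\varepsilon}(n,\omega)|_{\varepsilon=0}$, $q^{(0)}(\omega)=e_{J(\omega)}$, and for $1\le\ell\le m$, with $\omega^-=\theta^{-N^-(\omega)}\omega$, $q^{(\ell)}(\omega)=\sum_{i=0}^{\ell-1}\binom{\ell}{i}P^{(\ell-i)}(N^-(\omega),\omega^-)q^{(i)}(\omega^-)$. Let $\Omega^{(0)}=\Omega$ and $\Omega^{(\ell)}=\{q^{(1)}=0\}\cap\dots\cap\{q^{(\ell)}=0\}$. Two independent copies $\mathcal X,\mathcal Y$ of $\mathcal X^\varepsilon$ started in the fibre $S\times\{\omega\}$ are independent processes with cocycle $P_{\mathcal X^\varepsilon}$ and arbitrary initial distributions $u,v\in\Sigma_1^+$ on $S\times\{\omega\}$; thus $\mathbb P\{X_n\ne Y_n\mid X_0,Y_0\in S\times\{\omega\}\}=1-\sum_i(P_{\mathcal X^\varepsilon}(n,\omega)u)_i(P_{\mathcal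 X^\varepsilon}(n,\omega)v)_i$. *)

theory Defs
  imports "HOL-Probability.Probability"
begin

definition invertible_mds :: "'a measure \<Rightarrow> ('a \<Rightarrow> 'a) \<Rightarrow> ('a \<Rightarrow> 'a) \<Rightarrow> bool" where
  "invertible_mds M \<theta> \<theta>i \<longleftrightarrow>
     prob_space M \<and>
     \<theta> \<in> M \<rightarrow>\<^sub>M M \<and> \<theta>i \<in> M \<rightarrow>\<^sub>M M \<and>
     (\<forall>x\<in>space M. \<theta>i (\<theta> x) = x \<and> \<theta> (\<theta>i x) = x) \<and>
     distr M M \<theta> = M \<and>
     (\<forall>A\<in>sets M. \<theta> -` A \<inter> space M = A \<longrightarrow> measure M A = 0 \<or> measure M A = 1)"

type_synonym 'k mat = "real ^'k ^'k"

definition e_vec :: "'k::finite \<Rightarrow> real ^'k" where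
  "e_vec j = axis j 1"

text \<open>Induced l1 matrix norm (maximal absolute column sum).\<close>
definition mnorm1 :: "'k::finite mat \<Rightarrow> real" where
  "mnorm1 P = Max (range (\<lambda>j. \<Sum>i\<in>UNIV. \<bar>P $ i $ j\<bar>))"

definition col_stochastic :: "'k::finite mat \<Rightarrow> bool" where
  "col_stochastic P \<longleftrightarrow> (\<forall>i j. P $ i $ j \<ge> 0) \<and> (\<forall>j. (\<Sum>i\<in>UNIV. P $ i $ j) = 1)"

definition simplex1 :: "(real ^'k::finite) set" where
  "simplex1 = {v. (\<forall>j. v $ j \<ge> 0) \<and> (\<Sum>j\<in>UNIV. v $ j) = 1}"

primrec cocycle :: "('a \<Rightarrow> 'k::finite mat) \<Rightarrow> ('a \<Rightarrow> 'a) \<Rightarrow> nat \<Rightarrow> 'a \<Rightarrow> 'k mat" where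
  "cocycle A \<theta> 0 \<omega> = mat 1"
| "cocycle A \<theta> (Suc n) \<omega> = A ((\<theta> ^^ n) \<omega>) ** cocycle A \<theta> n \<omega>"

definition MRN :: "'a measure \<Rightarrow> ('a \<Rightarrow> 'k::finite mat) \<Rightarrow> bool" where
  "MRN M A \<longleftrightarrow> (\<forall>i j. (\<lambda>\<omega>. A \<omega> $ i $ j) \<in> borel_measurable M) \<and>
                (AE \<omega> in M. col_stochastic (A \<omega>))"

definition DRN :: "'a measure \<Rightarrow> ('a \<Rightarrow> 'k::finite mat) \<Rightarrow> bool" where
  "DRN M A \<longleftrightarrow> MRN M A \<and> (AE \<omega> in M. \<forall>i j. A \<omega> $ i $ j \<in> {0, 1})"

definition synchronized :: "'a measure \<Rightarrow> ('a \<Rightarrow> 'a) \<Rightarrow> ('a \<Rightarrow> 'k::finite mat) \<Rightarrow> bool" where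
  "synchronized M \<theta> A \<longleftrightarrow> DRN M A \<and>
     (\<exists>N::'a \<Rightarrow> nat. N \<in> M \<rightarrow>\<^sub>M count_space UNIV \<and>
        (AE \<omega> in M. \<forall>n\<ge>N \<omega>. \<forall>i j j'. cocycle A \<theta> n \<omega> $ i $ j = cocycle A \<theta> n \<omega> $ i $ j'))"

definition Cm_on :: "nat \<Rightarrow> (real \<Rightarrow> 'v::real_normed_vector) \<Rightarrow> real set \<Rightarrow> bool" where
  "Cm_on m f S \<longleftrightarrow> (\<exists>D. (\<forall>x\<in>S. D 0 x = f x) \<and>
      (\<forall>i<m. \<forall>x\<in>S. (D i has_vector_derivative D (Suc i) x) (at x within S)) \<and>
      continuous_on S (D m))"

primrec hder :: "nat \<Rightarrow> (real \<Rightarrow> 'v::real_normed_vector) \<Rightarrow> real \<Rightarrow> 'v" where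
  "hder 0 f = f"
| "hder (Suc i) f = (\<lambda>x. vector_derivative (hder i f) (at x within {0..}))"

text \<open>Markov perturbation: A e is the one-step matrix of X^e.\<close>
definition markov_perturbation :: "'a measure \<Rightarrow> (real \<Rightarrow> 'a \<Rightarrow> 'k::finite mat) \<Rightarrow> bool" where
  "markov_perturbation M A \<longleftrightarrow>
     (\<forall>\<epsilon>\<ge>0. MRN M (A \<epsilon>) \<and> (AE \<omega> in M. mnorm1 (A \<epsilon> \<omega> - A 0 \<omega>) \<le> \<epsilon>))"

definition Cm_markov_perturbation :: "nat \<Rightarrow> 'a measure \<Rightarrow> (real \<Rightarrow> 'a \<Rightarrow> 'k::finite mat) \<Rightarrow> bool" where
  "Cm_markov_perturbation m M A \<longleftrightarrow> markov_perturbation M A \<and>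
     (\<exists>\<epsilon>0>0. AE \<omega> in M. Cm_on m (\<lambda>\<epsilon>. A \<epsilon> \<omega>) {0..\<epsilon>0})"

definition Pder :: "(real \<Rightarrow> 'a \<Rightarrow> 'k::finite mat) \<Rightarrow> ('a \<Rightarrow> 'a) \<Rightarrow> nat \<Rightarrow> nat \<Rightarrow> 'a \<Rightarrow> 'k mat" where
  "Pder A \<theta> l n \<omega> = hder l (\<lambda>\<epsilon>. cocycle (A \<epsilon>) \<theta> n \<omega>) 0"

text \<open>q^(l) (with J the synchronization index, Nm the pull-back synchronization time, \<theta>i = inverse of \<theta>).\<close>
fun qvec :: "(real \<Rightarrow> 'a \<Rightarrow> 'k::finite mat) \<Rightarrow> ('a \<Rightarrow> 'a) \<Rightarrow> ('a \<Rightarrow> 'a) \<Rightarrow> ('a \<Rightarrow> 'k) \<Rightarrow> ('a \<Rightarrow> nat)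
               \<Rightarrow> nat \<Rightarrow> 'a \<Rightarrow> real ^'k" where
  "qvec A \<theta> \<theta>i J Nm l \<omega> =
     (if l = 0 then e_vec (J \<omega>)
      else (let \<omega>m = (\<theta>i ^^ Nm \<omega>) \<omega> in
            \<Sum>i<l. of_nat (l choose i) *\<^sub>R (Pder A \<theta> (l - i) (Nm \<omega>) \<omega>m *v qvec A \<theta> \<theta>i J Nm i \<omega>m)))"

definition Omega_l :: "'a measure \<Rightarrow> (real \<Rightarrow> 'a \<Rightarrow> 'k::finite mat) \<Rightarrow> ('a \<Rightarrow> 'a) \<Rightarrow> ('a \<Rightarrow> 'a) \<Rightarrow> ('a \<Rightarrow> 'k)
                     \<Rightarrow> ('a \<Rightarrow> nat) \<Rightarrow> nat \<Rightarrow> 'a set" where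
  "Omega_l M A \<theta> \<theta>i J Nm l = {\<omega>\<in>space M. \<forall>j\<in>{1..l}. qvec A \<theta> \<theta>i J Nm j \<omega> = 0}"

end

theory Submission
  imports Defs
begin

text \<open>Pull back from \<omega> along l + 1 consecutive synchronisation blocks and let C(\<epsilon>,\<omega>) be
  the product of the perturbed block matrices. At \<epsilon> = 0 each block sends every column to e_J,
  so by the Leibniz rule the k-th \<epsilon>-derivative of C(\<epsilon>,\<omega>) e_j is q^(k)(\<omega>) for every j.
  On \<Omega>^(l-1) - \<Omega>^(l) Taylor's formula gives C(\<epsilon>,\<omega>) e_j = e_J + \<epsilon>^l/l! q^(l) + o(\<epsilon>^l); as
  the columns stay in the simplex, q^(l) sums to 0 and is nonnegative off J, so its J-th entry is
  negative. Hence the J-th entry of every column lies in [c \<epsilon>^l, 1 - c \<epsilon>^l], which bounds the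
  disagreement probability of two independent copies below by c \<epsilon>^l, whatever stochastic matrix
  is applied to the initial distributions first. The constants are uniform on sets G of measure
  close to that of \<Omega>^(l-1) - \<Omega>^(l); P(n,\<omega>) factors through C(\<epsilon>,\<theta>^n \<omega>) for large n, and by
  ergodicity the times n with \<theta>^n \<omega> \<in> G have lower density at least the measure of G (proved
  by a tiling argument instead of Birkhoff's theorem).\<close>

section \<open>Towers of one-sided derivatives\<close>

lemma bounded_bilinear_matrix_matrix_mult:
  "bounded_bilinear (\<lambda>(A::real^'n^'m) (B::real^'p^'n). A ** B)"
proof -
  have "bilinear (\<lambda>(A::real^'n^'m) (B::real^'p^'n). A ** B)"
    unfolding bilinear_def
    by (auto simp: linear_iff vec_eq_iff matrix_matrix_mult_def sum.distrib sum_distrib_left algebra_simps)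
  thus ?thesis using bilinear_conv_bounded_bilinear by blast
qed

lemma sum_binomial_pascal:
  fixes f :: "nat \<Rightarrow> nat \<Rightarrow> 'a::real_vector"
  shows "(\<Sum>s\<le>t. real (t choose s) *\<^sub>R (f (Suc t - s) s + f (t - s) (Suc s)))
       = (\<Sum>s\<le>Suc t. real (Suc t choose s) *\<^sub>R f (Suc t - s) s)"
proof -
  have shift: "(\<Sum>s\<le>t. real (t choose s) *\<^sub>R f (Suc t - s) s)
         = f (Suc t) 0 + (\<Sum>s\<le>t. real (t choose Suc s) *\<^sub>R f (t - s) (Suc s))"
  proof -
    have "(\<Sum>s\<le>Suc t. real (t choose s) *\<^sub>R f (Suc t - s) s)
        = f (Suc t) 0 + (\<Sum>s\<le>t. real (t choose Suc s) *\<^sub>R f (Suc t - Suc s) (Suc s))"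
      by (subst sum.atMost_Suc_shift) simp
    moreover have "(\<Sum>s\<le>Suc t. real (t choose s) *\<^sub>R f (Suc t - s) s)
        = (\<Sum>s\<le>t. real (t choose s) *\<^sub>R f (Suc t - s) s)"
      by simp
    ultimately show ?thesis by simp
  qed
  have "(\<Sum>s\<le>Suc t. real (Suc t choose s) *\<^sub>R f (Suc t - s) s)
      = f (Suc t) 0 + (\<Sum>s\<le>t. real (Suc t choose Suc s) *\<^sub>R f (t - s) (Suc s))"
    by (subst sum.atMost_Suc_shift) simp
  thus ?thesis
    unfolding scaleR_right_distrib sum.distrib shift by (simp add: sum.distrib algebra_simps)
qed

definition has_derivs_on :: "nat \<Rightarrow> (nat \<Rightarrow> real \<Rightarrow> 'v::real_normed_vector) \<Rightarrow> real set \<Rightarrow> bool" where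
  "has_derivs_on m D S \<longleftrightarrow>
     (\<forall>i<m. \<forall>x\<in>S. (D i has_vector_derivative D (Suc i) x) (at x within S)) \<and> continuous_on S (D m)"

lemma Cm_onE:
  assumes "Cm_on m f S"
  obtains D where "\<And>x. x \<in> S \<Longrightarrow> D 0 x = f x" "has_derivs_on m D S"
  using assms unfolding Cm_on_def has_derivs_on_def by blast

lemma has_derivs_on_continuous:
  assumes "has_derivs_on m D S" "k \<le> m"
  shows "continuous_on S (D k)"
proof (cases "k = m")
  case True thus ?thesis using assms by (simp add: has_derivs_on_def)
next
  case False
  hence "\<forall>x\<in>S. (D k has_vector_derivative D (Suc k) x) (at x within S)"
    using assms by (simp add: has_derivs_on_def)
  thus ?thesis
    by (meson continuous_on_eq_continuous_within has_vector_derivative_continuous)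
qed

lemma has_derivs_on_mono: "has_derivs_on m D S \<Longrightarrow> k \<le> m \<Longrightarrow> has_derivs_on k D S"
  using has_derivs_on_continuous unfolding has_derivs_on_def by auto

lemma has_derivs_on_Suc_shift: "has_derivs_on (Suc i) D S \<Longrightarrow> has_derivs_on i (\<lambda>k. D (Suc k)) S"
  unfolding has_derivs_on_def by auto

lemma Cm_on_continuous: "Cm_on m f S \<Longrightarrow> continuous_on S f"
  by (metis Cm_onE continuous_on_eq has_derivs_on_continuous le0)

lemma Cm_on_const: "Cm_on m (\<lambda>x. c) S"
  unfolding Cm_on_def
  by (intro exI[of _ "\<lambda>t x. if t = 0 then c else 0"])
     (auto intro!: has_vector_derivative_const continuous_intros)

definition leibniz_derivs ::
    "(nat \<Rightarrow> real \<Rightarrow> real^'n^'m) \<Rightarrow> (nat \<Rightarrow> real \<Rightarrow> real^'p^'n) \<Rightarrow> nat \<Rightarrow> real \<Rightarrow> real^'p^'m" where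
  "leibniz_derivs Df Dg t x = (\<Sum>s\<le>t. real (t choose s) *\<^sub>R (Df (t - s) x ** Dg s x))"

lemma has_derivs_on_matrix_mult:
  assumes f: "has_derivs_on m Df S" and g: "has_derivs_on m Dg S"
  shows "has_derivs_on m (leibniz_derivs Df Dg) S"
  unfolding has_derivs_on_def
proof safe
  interpret bb: bounded_bilinear "\<lambda>(A::real^'n^'m) (B::real^'p^'n). A ** B"
    by (rule bounded_bilinear_matrix_matrix_mult)
  fix i x assume i: "i < m" and x: "x \<in> S"
  have "((\<lambda>x. \<Sum>s\<le>i. real (i choose s) *\<^sub>R (Df (i - s) x ** Dg s x)) has_vector_derivative
     (\<Sum>s\<le>i. real (i choose s) *\<^sub>R (Df (i - s) x ** Dg (Suc s) x + Df (Suc (i - s)) x ** Dg s x)))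
     (at x within S)"
  proof (rule has_vector_derivative_sum)
    fix s assume "s \<in> {..i}"
    then have "(Df (i - s) has_vector_derivative Df (Suc (i - s)) x) (at x within S)"
      "(Dg s has_vector_derivative Dg (Suc s) x) (at x within S)"
      using f g i x unfolding has_derivs_on_def by auto
    from bb.has_vector_derivative[OF this]
    show "((\<lambda>x. real (i choose s) *\<^sub>R (Df (i - s) x ** Dg s x)) has_vector_derivative
       real (i choose s) *\<^sub>R (Df (i - s) x ** Dg (Suc s) x + Df (Suc (i - s)) x ** Dg s x))
       (at x within S)"
      by (rule bounded_linear.has_vector_derivative[OF bounded_linear_scaleR_right])
  qed
  moreover have "(\<Sum>s\<le>i. real (i choose s) *\<^sub>R (Df (i - s) x ** Dg (Suc s) x + Df (Suc (i - s)) x ** Dg s x))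
     = leibniz_derivs Df Dg (Suc i) x"
    unfolding leibniz_derivs_def
    using sum_binomial_pascal[of i "\<lambda>a b. Df a x ** Dg b x"] by (simp add: Suc_diff_le add.commute)
  ultimately show "(leibniz_derivs Df Dg i has_vector_derivative leibniz_derivs Df Dg (Suc i) x)
      (at x within S)"
    unfolding leibniz_derivs_def[abs_def] by simp
next
  interpret bb: bounded_bilinear "\<lambda>(A::real^'n^'m) (B::real^'p^'n). A ** B"
    by (rule bounded_bilinear_matrix_matrix_mult)
  have "\<And>k. k \<le> m \<Longrightarrow> continuous_on S (Df k)" "\<And>k. k \<le> m \<Longrightarrow> continuous_on S (Dg k)"
    using has_derivs_on_continuous f g by blast+
  then show "continuous_on S (leibniz_derivs Df Dg m)"
    unfolding leibniz_derivs_def[abs_def] by (auto intro!: continuous_intros bb.continuous_on)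
qed

lemma Cm_on_matrix_mult:
  fixes f :: "real \<Rightarrow> real^'n^'m" and g :: "real \<Rightarrow> real^'p^'n"
  assumes "Cm_on m f S" "Cm_on m g S"
  shows "Cm_on m (\<lambda>x. f x ** g x) S"
proof -
  obtain Df where f: "\<And>x. x \<in> S \<Longrightarrow> Df 0 x = f x" "has_derivs_on m Df S"
    using Cm_onE[OF assms(1)] by metis
  obtain Dg where g: "\<And>x. x \<in> S \<Longrightarrow> Dg 0 x = g x" "has_derivs_on m Dg S"
    using Cm_onE[OF assms(2)] by metis
  show ?thesis unfolding Cm_on_def
    using has_derivs_on_matrix_mult[OF f(2) g(2)] f(1) g(1)
    by (intro exI[of _ "leibniz_derivs Df Dg"]) (auto simp: leibniz_derivs_def has_derivs_on_def)
qed

lemma at_within_Ici_eq_Icc: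
  fixes x e :: real
  assumes "0 \<le> x" "x < e"
  shows "at x within {0..} = at x within {0..e}"
  by (rule at_within_nhd[where S="{..<e}"]) (use assms in auto)

lemma at_within_Ici_neq_bot:
  fixes x e :: real
  assumes "0 \<le> x" "x < e"
  shows "at x within {0..} \<noteq> bot"
proof -
  have "x islimpt {0..e}"
    using assms by (subst islimpt_Icc) auto
  thus ?thesis using trivial_limit_within at_within_Ici_eq_Icc[OF assms] by metis
qed

lemma hder_eq_derivs:
  assumes D: "has_derivs_on m D {0..e}" and f: "\<And>x. x \<in> {0..e} \<Longrightarrow> D 0 x = f x"
    and k: "k \<le> m"
  shows "0 \<le> x \<Longrightarrow> x < e \<Longrightarrow> hder k f x = D k x"
  using k
proof (induction k arbitrary: x)
  case 0 thus ?case using f by simp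
next
  case (Suc k)
  have "(D k has_vector_derivative D (Suc k) x) (at x within {0..e})"
    using D Suc.prems unfolding has_derivs_on_def by auto
  hence "(D k has_vector_derivative D (Suc k) x) (at x within {0..})"
    using at_within_Ici_eq_Icc[OF Suc.prems(1,2)] by simp
  hence "(hder k f has_vector_derivative D (Suc k) x) (at x within {0..})"
  proof (rule has_vector_derivative_transform_within[of _ _ _ _ "e - x"])
    show "0 < e - x" "x \<in> {0..}" using Suc.prems by auto
    fix x' assume "x' \<in> {0..}" "dist x' x < e - x"
    thus "D k x' = hder k f x'" using Suc.IH[of x'] Suc.prems by (auto simp: dist_real_def)
  qed
  thus ?case
    using vector_derivative_within[OF at_within_Ici_neq_bot[OF Suc.prems(1,2)]] by simp
qed

lemma hder_matrix_mult:
  fixes f :: "real \<Rightarrow> real^'n^'m" and g :: "real \<Rightarrow> real^'p^'n"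
  assumes "Cm_on m f {0..e}" "Cm_on m g {0..e}" "e > 0" "t \<le> m"
  shows "hder t (\<lambda>x. f x ** g x) 0 = (\<Sum>s\<le>t. real (t choose s) *\<^sub>R (hder (t - s) f 0 ** hder s g 0))"
proof -
  obtain Df where f: "\<And>x. x \<in> {0..e} \<Longrightarrow> Df 0 x = f x" "has_derivs_on m Df {0..e}"
    using Cm_onE[OF assms(1)] by metis
  obtain Dg where g: "\<And>x. x \<in> {0..e} \<Longrightarrow> Dg 0 x = g x" "has_derivs_on m Dg {0..e}"
    using Cm_onE[OF assms(2)] by metis
  have "hder t (\<lambda>x. f x ** g x) 0 = leibniz_derivs Df Dg t 0"
    using hder_eq_derivs[OF has_derivs_on_matrix_mult[OF f(2) g(2)] _ assms(4)] f(1) g(1) assms(3)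
    by (simp add: leibniz_derivs_def)
  also have "\<dots> = (\<Sum>s\<le>t. real (t choose s) *\<^sub>R (hder (t - s) f 0 ** hder s g 0))"
    unfolding leibniz_derivs_def
    using hder_eq_derivs[OF f(2) f(1)] hder_eq_derivs[OF g(2) g(1)] assms(3,4)
    by (intro sum.cong refl) auto
  finally show ?thesis .
qed

lemma has_derivs_on_linear_const:
  fixes L :: "'v::real_normed_vector \<Rightarrow> 'w::real_normed_vector"
  assumes D: "has_derivs_on m D {0..e}" and e: "e > 0" and L: "bounded_linear L"
    and c: "\<And>x. x \<in> {0..e} \<Longrightarrow> L (D 0 x) = c"
  shows "t \<le> m \<Longrightarrow> x \<in> {0..e} \<Longrightarrow> L (D t x) = (if t = 0 then c else 0)"
proof (induction t arbitrary: x)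
  case 0 thus ?case using c by simp
next
  case (Suc t)
  have "((\<lambda>y. L (D t y)) has_vector_derivative L (D (Suc t) x)) (at x within {0..e})"
    using D Suc.prems unfolding has_derivs_on_def
    by (intro bounded_linear.has_vector_derivative[OF L]) auto
  moreover have "((\<lambda>y. L (D t y)) has_vector_derivative 0) (at x within {0..e})"
  proof (rule has_vector_derivative_transform_within[OF has_vector_derivative_const, of 1])
    show "x \<in> {0..e}" using Suc.prems by simp
    fix x' assume "x' \<in> {0..e}" "dist x' x < 1"
    thus "(if t = 0 then c else 0) = L (D t x')" using Suc.IH[of x'] Suc.prems by simp
  qed simp
  ultimately have "L (D (Suc t) x) = 0"
    using vector_derivative_unique_within_closed_interval[of 0 e x] e Suc.prems
    by (simp add: cbox_interval)
  thus ?case by simp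
qed

lemma hder_linear_const:
  fixes L :: "'v::real_normed_vector \<Rightarrow> 'w::real_normed_vector"
  assumes "Cm_on m f {0..e}" "e > 0" "bounded_linear L" "\<And>x. x \<in> {0..e} \<Longrightarrow> L (f x) = c"
    and "1 \<le> t" "t \<le> m"
  shows "L (hder t f 0) = 0"
proof -
  obtain D where D: "\<And>x. x \<in> {0..e} \<Longrightarrow> D 0 x = f x" "has_derivs_on m D {0..e}"
    using Cm_onE[OF assms(1)] by metis
  have "L (D t 0) = 0"
    using has_derivs_on_linear_const[OF D(2) assms(2,3), of c t 0] assms D(1) by simp
  thus ?thesis using hder_eq_derivs[OF D(2) D(1) assms(6), of 0] assms(2) by simp
qed

lemma has_vector_derivative_taylor_poly:
  "((\<lambda>t. \<Sum>k\<le>Suc i. (t ^ k / fact k) *\<^sub>R (c k :: 'v::real_normed_vector)) has_vector_derivative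
      (\<Sum>k\<le>i. (t ^ k / fact k) *\<^sub>R c (Suc k))) (at t within S)"
proof -
  have "((\<lambda>t. t ^ k / fact k) has_real_derivative (if k = 0 then 0 else t ^ (k - 1) / fact (k - 1)))
      (at t within S)" for k
  proof (cases k)
    case (Suc j)
    have "((\<lambda>t. t ^ k / fact k) has_real_derivative (real k * t ^ (k - 1)) / fact k) (at t within S)"
      by (auto intro!: derivative_eq_intros)
    moreover have "fact k = real k * fact (k - 1)" using Suc by (simp add: fact_Suc)
    ultimately show ?thesis using Suc by simp
  qed simp
  hence "((\<lambda>t. \<Sum>k\<le>Suc i. (t ^ k / fact k) *\<^sub>R c k) has_vector_derivative
      (\<Sum>k\<le>Suc i. (if k = 0 then 0 else t ^ (k - 1) / fact (k - 1)) *\<^sub>R c k)) (at t within S)"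
    by (intro has_vector_derivative_sum has_vector_derivative_scaleR[of _ _ _ _ "\<lambda>_. c _",
          OF _ has_vector_derivative_const, simplified])
  moreover have "(\<Sum>k\<le>Suc i. (if k = 0 then 0 else t ^ (k - 1) / fact (k - 1)) *\<^sub>R c k)
     = (\<Sum>k\<le>i. (t ^ k / fact k) *\<^sub>R c (Suc k))"
    by (subst sum.atMost_Suc_shift) simp
  ultimately show ?thesis by simp
qed

lemma taylor_peano_derivs:
  fixes D :: "nat \<Rightarrow> real \<Rightarrow> 'v::real_normed_vector"
  assumes "has_derivs_on i D {0..e}" "e > 0" "\<eta> > 0"
  shows "\<exists>d>0. \<forall>x. 0 < x \<and> x < d \<longrightarrow> norm (D 0 x - (\<Sum>k\<le>i. (x ^ k / fact k) *\<^sub>R D k 0)) \<le> \<eta> * x ^ i"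
  using assms
proof (induction i arbitrary: D \<eta>)
  case 0
  have "continuous (at 0 within {0..e}) (D 0)"
    using 0 by (simp add: has_derivs_on_def continuous_on_eq_continuous_within)
  then obtain d where d: "d > 0" "\<And>x. x \<in> {0..e} \<Longrightarrow> dist x 0 < d \<Longrightarrow> dist (D 0 x) (D 0 0) < \<eta>"
    using 0 unfolding continuous_within_eps_delta by blast
  show ?case
  proof (intro exI[of _ "min d e"] conjI allI impI)
    fix x assume "0 < x \<and> x < min d e"
    thus "norm (D 0 x - (\<Sum>k\<le>0. (x ^ k / fact k) *\<^sub>R D k 0)) \<le> \<eta> * x ^ 0"
      using d(2)[of x] by (simp add: dist_norm)
  qed (use d 0 in simp)
next
  case (Suc i)
  obtain d where d: "d > 0" "\<And>x. 0 < x \<and> x < d \<Longrightarrow>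
      norm (D 1 x - (\<Sum>k\<le>i. (x ^ k / fact k) *\<^sub>R D (Suc k) 0)) \<le> \<eta> * x ^ i"
    using Suc.IH[OF has_derivs_on_Suc_shift[OF Suc.prems(1)] Suc.prems(2,3)] by auto
  define g where "g t = D 0 t - (\<Sum>k\<le>Suc i. (t ^ k / fact k) *\<^sub>R D k 0)" for t
  define g' where "g' t = D 1 t - (\<Sum>k\<le>i. (t ^ k / fact k) *\<^sub>R D (Suc k) 0)" for t
  have dg: "(g has_vector_derivative g' t) (at t within {0..e})" if "t \<in> {0..e}" for t
    unfolding g_def g'_def using Suc.prems(1) that
    by (intro has_vector_derivative_diff has_vector_derivative_taylor_poly)
       (auto simp: has_derivs_on_def)
  have g0: "g 0 = 0" "g' 0 = 0"
    by (simp_all add: g_def g'_def sum.atMost_shift zero_power)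
  show ?case
  proof (intro exI[of _ "min d e"] conjI allI impI)
    show "min d e > 0" using d Suc by simp
    fix x assume x: "0 < x \<and> x < min d e"
    have "norm (g' t - g' 0) \<le> \<eta> * x ^ i" if "t \<in> {0..x}" for t
    proof (cases "t = 0")
      case False
      hence "norm (g' t) \<le> \<eta> * t ^ i" using d(2)[of t] that x by (simp add: g'_def)
      also have "\<dots> \<le> \<eta> * x ^ i" using that Suc.prems(3) by (intro mult_left_mono power_mono) auto
      finally show ?thesis by (simp add: g0)
    qed (use Suc.prems(3) x in \<open>simp add: g0\<close>)
    moreover have "(g has_vector_derivative g' t) (at t within {0..x})" if "t \<in> {0..x}" for t
      using dg[of t] that x by (auto intro: has_vector_derivative_within_subset)
    ultimately have "norm (g x - g 0 - (x - 0) *\<^sub>R g' 0) \<le> norm (x - 0) * (\<eta> * x ^ i)"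
      using x by (intro vector_differentiable_bound_linearization[where S="{0..x}"])
                 (auto simp: closed_segment_real_eq)
    hence "norm (g x) \<le> \<eta> * x ^ Suc i"
      using x by (simp add: g0 algebra_simps)
    thus "norm (D 0 x - (\<Sum>k\<le>Suc i. (x ^ k / fact k) *\<^sub>R D k 0)) \<le> \<eta> * x ^ Suc i"
      by (simp add: g_def)
  qed
qed

lemma taylor_peano_hder:
  fixes f :: "real \<Rightarrow> 'v::real_normed_vector"
  assumes "Cm_on m f {0..e}" "e > 0" "i \<le> m" "\<eta> > 0"
  shows "\<exists>d>0. \<forall>x. 0 < x \<and> x < d \<longrightarrow> norm (f x - (\<Sum>k\<le>i. (x ^ k / fact k) *\<^sub>R hder k f 0)) \<le> \<eta> * x ^ i"
proof -
  obtain D where D: "\<And>x. x \<in> {0..e} \<Longrightarrow> D 0 x = f x" "has_derivs_on m D {0..e}"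
    using Cm_onE[OF assms(1)] by metis
  obtain d where d: "d > 0"
    "\<And>x. 0 < x \<and> x < d \<Longrightarrow> norm (D 0 x - (\<Sum>k\<le>i. (x ^ k / fact k) *\<^sub>R D k 0)) \<le> \<eta> * x ^ i"
    using taylor_peano_derivs[OF has_derivs_on_mono[OF D(2) assms(3)] assms(2,4)] by blast
  have h: "hder k f 0 = D k 0" if "k \<le> i" for k
    using hder_eq_derivs[OF D(2) D(1), of k 0] that assms(2,3) by simp
  show ?thesis
  proof (intro exI[of _ "min d e"] conjI allI impI)
    fix x assume "0 < x \<and> x < min d e"
    thus "norm (f x - (\<Sum>k\<le>i. (x ^ k / fact k) *\<^sub>R hder k f 0)) \<le> \<eta> * x ^ i"
      using d(2)[of x] D(1)[of x] h by simp
  qed (use d assms in simp)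
qed

section \<open>Visits of an ergodic map\<close>

lemma measurable_funpow: "f \<in> M \<rightarrow>\<^sub>M M \<Longrightarrow> (f ^^ n) \<in> M \<rightarrow>\<^sub>M M"
  by (induction n) auto

lemma distr_funpow:
  assumes "f \<in> M \<rightarrow>\<^sub>M M" "distr M M f = M"
  shows "distr M M (f ^^ n) = M"
proof (induction n)
  case (Suc n)
  have "distr (distr M M (f ^^ n)) M f = distr M M (f \<circ> (f ^^ n))"
    using assms measurable_funpow[OF assms(1)] by (intro distr_distr) auto
  thus ?case using Suc assms by (simp add: comp_def)
qed simp

lemma AE_funpow:
  assumes "f \<in> M \<rightarrow>\<^sub>M M" "distr M M f = M" "AE x in M. P x"
  shows "AE x in M. P ((f ^^ n) x)"
  using AE_distrD[OF measurable_funpow[OF assms(1)]] distr_funpow[OF assms(1,2)] assms(3) by metis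

definition visits :: "('a \<Rightarrow> 'a) \<Rightarrow> 'a set \<Rightarrow> nat \<Rightarrow> 'a \<Rightarrow> real" where
  "visits f G n x = (\<Sum>j<n. indicator G ((f ^^ j) x))"

lemma visits_eq_card: "visits f G n x = real (card {j. j < n \<and> (f ^^ j) x \<in> G})"
  unfolding visits_def indicator_def
  by (simp add: sum.If_cases) (simp add: Int_def lessThan_def conj_commute)

lemma visits_add: "visits f G (a + b) x = visits f G a x + visits f G b ((f ^^ a) x)"
proof (induction b)
  case (Suc b)
  have "(f ^^ a) ((f ^^ b) x) = (f ^^ b) ((f ^^ a) x)" by (metis comp_apply funpow_add add.commute)
  thus ?case using Suc by (simp add: visits_def funpow_add)
qed (simp add: visits_def)

lemma visits_Suc: "visits f G (Suc n) x = indicator G x + visits f G n (f x)"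
  using visits_add[of f G 1 n x] by (simp add: visits_def)

lemma visits_nonneg: "0 \<le> visits f G n x"
  unfolding visits_def by (intro sum_nonneg) auto

lemma visits_le: "visits f G n x \<le> n"
proof -
  have "visits f G n x \<le> (\<Sum>j<n. 1)" unfolding visits_def by (intro sum_mono) (auto simp: indicator_def)
  thus ?thesis by simp
qed

lemma borel_measurable_visits [measurable]:
  assumes "f \<in> M \<rightarrow>\<^sub>M M" "G \<in> sets M"
  shows "(\<lambda>x. visits f G n x) \<in> borel_measurable M"
  unfolding visits_def using measurable_funpow[OF assms(1)] assms(2)
  by (intro borel_measurable_sum borel_measurable_indicator') auto

lemma integral_visits:
  assumes "prob_space M" "f \<in> M \<rightarrow>\<^sub>M M" "distr M M f = M" "G \<in> sets M"
  shows "integral\<^sup>L M (visits f G N) = N * measure M G"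
proof -
  interpret prob_space M by fact
  have "integral\<^sup>L M (\<lambda>x. indicator G ((f ^^ j) x) :: real) = measure M G" for j
  proof -
    have "integral\<^sup>L M (\<lambda>x. indicator G ((f ^^ j) x) :: real) = integral\<^sup>L (distr M M (f ^^ j)) (indicator G)"
      using assms measurable_funpow[OF assms(2)] by (subst integral_distr) auto
    thus ?thesis using distr_funpow[OF assms(2,3)] assms by simp
  qed
  moreover have "integrable M (\<lambda>x. indicator G ((f ^^ j) x) :: real)" for j
    using measurable_funpow[OF assms(2), of j] assms(4)
    by (intro integrable_const_bound[where B=1]) (auto simp: indicator_def)
  ultimately show ?thesis
    unfolding visits_def[abs_def]
    by (subst Bochner_Integration.integral_sum) auto
qed

text \<open>Cut the orbit into blocks: from a point outside B some block of length at most K has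
  visit frequency at most r, and each point of B is a block of length one.\<close>
lemma visits_tiling:
  fixes r :: real and f :: "'a \<Rightarrow> 'a" and K :: nat
  assumes r: "0 \<le> r" and B: "B = {x. \<not> (\<exists>t\<in>{1..K}. visits f G t x \<le> r * t)}"
  shows "visits f G N x \<le> r * N + visits f B N x + K"
proof (induction N arbitrary: x rule: less_induct)
  case (less N)
  show ?case
  proof (cases "x \<in> B")
    case True
    show ?thesis
    proof (cases N)
      case 0 thus ?thesis by (simp add: visits_def)
    next
      case (Suc N')
      have "visits f G N' (f x) \<le> r * N' + visits f B N' (f x) + K" using less Suc by simp
      moreover have "indicator G x \<le> (1::real)" by (simp add: indicator_def)
      moreover have "r * N' \<le> r * N" using Suc r by (intro mult_left_mono) auto
      moreover have "visits f G N x = indicator G x + visits f G N' (f x)"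
        "visits f B N x = 1 + visits f B N' (f x)"
        using True Suc by (simp_all add: visits_Suc)
      ultimately show ?thesis by linarith
    qed
  next
    case False
    then obtain t where t: "t \<in> {1..K}" "visits f G t x \<le> r * t" unfolding B by blast
    show ?thesis
    proof (cases "t \<le> N")
      case True
      have N: "N = t + (N - t)" using True by simp
      have "visits f G (N - t) ((f ^^ t) x) \<le> r * (N - t) + visits f B (N - t) ((f ^^ t) x) + K"
        using less.IH[of "N - t"] t True by (simp add: of_nat_diff)
      moreover have "visits f B (N - t) ((f ^^ t) x) \<le> visits f B N x"
        using visits_add[of f B t "N - t" x] visits_nonneg[of f B t x] N by simp
      moreover have "visits f G N x = visits f G t x + visits f G (N - t) ((f ^^ t) x)"
        using visits_add[of f G t "N - t" x] N by simp
      moreover have "r * t + r * (N - t) = r * N" using True by (simp add: algebra_simps of_nat_diff)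
      ultimately show ?thesis using t by linarith
    next
      case False
      hence "visits f G N x \<le> K" using visits_le[of f G N x] t by simp
      thus ?thesis using visits_nonneg[of f B N x] r by (simp add: add_increasing)
    qed
  qed
qed

lemma measure_le_visits_block_defect:
  fixes N K :: nat and r :: real
  assumes P: "prob_space M" and f: "f \<in> M \<rightarrow>\<^sub>M M" "distr M M f = M"
    and G: "G \<in> sets M" and r: "0 \<le> r" and N: "0 < N"
    and B: "B = {x\<in>space M. \<not> (\<exists>t\<in>{1..K}. visits f G t x \<le> r * t)}"
  shows "measure M G \<le> r + measure M B + K / N"
proof -
  interpret prob_space M by (rule P)
  have Bm: "B \<in> sets M" unfolding B using f G by measurable
  define B' where "B' = {x. \<not> (\<exists>t\<in>{1..K}. visits f G t x \<le> r * t)}"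
  have "visits f B' N x = visits f B N x" if "x \<in> space M" for x
    using measurable_space[OF measurable_funpow[OF f(1)] that]
    unfolding visits_def B B'_def by (intro sum.cong) (auto simp: indicator_def)
  hence "visits f G N x \<le> r * N + visits f B N x + K" if "x \<in> space M" for x
    using visits_tiling[OF r B'_def, of N x] that by simp
  moreover have intg: "integrable M (visits f H N)" if "H \<in> sets M" for H
    using that f by (intro integrable_const_bound[where B=N]) (auto simp: visits_nonneg visits_le)
  ultimately have "integral\<^sup>L M (visits f G N) \<le> integral\<^sup>L M (\<lambda>x. r * N + visits f B N x + K)"
    using G Bm by (intro integral_mono) auto
  hence "N * measure M G \<le> r * N + N * measure M B + K"
    using integral_visits[OF P f G] integral_visits[OF P f Bm] intg[OF Bm] Bm
    by (simp add: prob_space)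
  thus ?thesis using N by (simp add: field_simps)
qed

definition lagging_set :: "'a measure \<Rightarrow> ('a \<Rightarrow> 'a) \<Rightarrow> 'a set \<Rightarrow> real \<Rightarrow> 'a set" where
  "lagging_set M f G r = {x\<in>space M. \<exists>c::nat. \<forall>N. \<exists>n\<ge>N. visits f G n x < r * n + c}"

lemma lagging_set_invariant:
  assumes f: "f \<in> M \<rightarrow>\<^sub>M M" and r: "0 < r"
  shows "f -` lagging_set M f G r \<inter> space M = lagging_set M f G r"
proof (intro set_eqI iffI)
  fix x assume x: "x \<in> f -` lagging_set M f G r \<inter> space M"
  then obtain c :: nat where c: "\<And>N. \<exists>n\<ge>N. visits f G n (f x) < r * n + c"
    unfolding lagging_set_def by auto
  have "\<exists>n\<ge>N. visits f G n x < r * n + (c + 1)" for N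
  proof -
    obtain n where n: "n \<ge> N" "visits f G n (f x) < r * n + c" using c by blast
    hence "visits f G (Suc n) x < r * Suc n + (c + 1)"
      using r by (simp add: visits_Suc indicator_def algebra_simps)
    thus ?thesis using n by (intro exI[of _ "Suc n"]) auto
  qed
  thus "x \<in> lagging_set M f G r" using x unfolding lagging_set_def by blast
next
  fix x assume x: "x \<in> lagging_set M f G r"
  then obtain c :: nat where c: "\<And>N. \<exists>n\<ge>N. visits f G n x < r * n + c" and xs: "x \<in> space M"
    unfolding lagging_set_def by auto
  define c' where "c' = c + nat \<lceil>r\<rceil>"
  have "\<exists>n\<ge>N. visits f G n (f x) < r * n + c'" for N
  proof -
    obtain n where n: "n \<ge> Suc N" "visits f G n x < r * n + c" using c by blast
    then obtain n' where n': "n = Suc n'" "n' \<ge> N" by (cases n) auto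
    have "visits f G n' (f x) \<le> visits f G n x"
      using n'(1) by (simp add: visits_Suc indicator_def)
    also have "\<dots> < r * n' + c'"
      using n n'(1) unfolding c'_def by (simp add: algebra_simps) linarith
    finally show ?thesis using n' by auto
  qed
  thus "x \<in> f -` lagging_set M f G r \<inter> space M"
    using xs measurable_space[OF f xs] unfolding lagging_set_def by auto
qed

text \<open>If almost every point lagged behind the frequency r < r' < \<mu> G, then for large K almost
  every point would start a block of length at most K with frequency at most r', contradicting
  the integrated block bound.\<close>
lemma measure_lagging_set_neq_1:
  assumes P: "prob_space M" and f: "f \<in> M \<rightarrow>\<^sub>M M" "distr M M f = M"
    and G: "G \<in> sets M" and r: "0 < r" "r < measure M G"
  shows "measure M (lagging_set M f G r) \<noteq> 1"
proof
  interpret prob_space M by (rule P)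
  define E where "E = lagging_set M f G r"
  have Em: "E \<in> sets M" unfolding E_def lagging_set_def using f G by measurable
  assume "measure M (lagging_set M f G r) = 1"
  hence "measure M (space M - E) = 0" using Em by (simp add: prob_compl E_def)
  define r' where "r' = (r + measure M G) / 2"
  have r': "r < r'" "r' < measure M G" "0 \<le> r'" using r unfolding r'_def by auto
  define B where "B K = {x\<in>space M. \<not> (\<exists>t\<in>{1..K}. visits f G t x \<le> r' * t)}" for K :: nat
  have Bm: "B K \<in> sets M" for K unfolding B_def using f G by measurable
  have "(\<Inter>K. B K) \<subseteq> space M - E"
  proof safe
    fix x assume x: "x \<in> (\<Inter>K. B K)" "x \<in> E"
    then obtain c :: nat where c: "\<And>N. \<exists>n\<ge>N. visits f G n x < r * n + c"
      unfolding E_def lagging_set_def by auto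
    obtain n where n: "n \<ge> Suc (nat \<lceil>c / (r' - r)\<rceil>)" "visits f G n x < r * n + c" using c by blast
    have "c / (r' - r) \<le> n" using n(1) by linarith
    hence "c \<le> (r' - r) * n" using r' by (simp add: field_simps)
    hence "visits f G n x \<le> r' * n" using n(2) by (simp add: algebra_simps)
    moreover have "n \<ge> 1" using n by simp
    ultimately have "x \<notin> B n" unfolding B_def by auto
    thus False using x by auto
  qed (auto simp: B_def)
  hence "measure M (\<Inter>K. B K) = 0"
    using \<open>measure M (space M - E) = 0\<close> Bm Em finite_measure_mono[of "\<Inter>K. B K" "space M - E"]
    by (simp add: measure_le_0_iff)
  moreover have "decseq B" unfolding B_def decseq_def by auto
  ultimately have "(\<lambda>K. measure M (B K)) \<longlonglongrightarrow> 0"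
    using finite_Lim_measure_decseq[of B] Bm by auto
  then obtain K where K: "measure M (B K) < (measure M G - r') / 2"
    using order_tendstoD(2)[of _ 0 sequentially "(measure M G - r') / 2"] r'
    by (auto simp: eventually_sequentially)
  define N :: nat where "N = nat \<lceil>2 * K / (measure M G - r')\<rceil> + 1"
  have "2 * K / (measure M G - r') < N" "0 < N" unfolding N_def by linarith+
  hence "K / N < (measure M G - r') / 2" using r' by (simp add: field_simps)
  moreover have "measure M G \<le> r' + measure M (B K) + K / N"
    using measure_le_visits_block_defect[OF P f G r'(3), of N "B K" K] by (simp add: N_def B_def)
  ultimately show False using K by (smt (verit) field_sum_of_halves)
qed

lemma AE_visits_lower_density:
  assumes P: "prob_space M" and f: "f \<in> M \<rightarrow>\<^sub>M M" "distr M M f = M"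
    and ergodic: "\<forall>A\<in>sets M. f -` A \<inter> space M = A \<longrightarrow> measure M A = 0 \<or> measure M A = 1"
    and G: "G \<in> sets M" and r: "r < measure M G"
  shows "AE x in M. \<exists>N. \<forall>n\<ge>N. r * n \<le> visits f G n x"
proof (cases "r \<le> 0")
  case True
  thus ?thesis by (intro AE_I2 exI[of _ 0] allI impI order_trans[OF _ visits_nonneg])
                  (simp add: mult_nonpos_nonneg)
next
  case False
  interpret prob_space M by (rule P)
  define E where "E = lagging_set M f G r"
  have Em: "E \<in> sets M" unfolding E_def lagging_set_def using f G by measurable
  have "measure M E = 0"
    using ergodic Em lagging_set_invariant[OF f(1), of r G] measure_lagging_set_neq_1[OF P f G _ r]
      False unfolding E_def by auto
  hence "E \<in> null_sets M" using Em by (simp add: null_sets_def emeasure_eq_measure)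
  moreover have "{x\<in>space M. \<not> (\<exists>N. \<forall>n\<ge>N. r * n \<le> visits f G n x)} \<subseteq> E"
    unfolding E_def lagging_set_def by (force simp: not_le intro: exI[of _ "0::nat"])
  ultimately show ?thesis by (rule AE_I')
qed

lemma liminf_density_ge:
  fixes r r' :: real and k N\<^sub>0 :: nat
  assumes visits: "\<And>n. n \<ge> N\<^sub>0 \<Longrightarrow> r * n \<le> card {j. j < n \<and> P j}" and r': "r' < r"
    and k: "0 < k"
  shows "ereal r' \<le> liminf (\<lambda>n. ereal (card ({j. k \<le> j \<and> P j} \<inter> {1..n}) / n))"
proof (rule Liminf_bounded, unfold eventually_sequentially)
  show "\<exists>N. \<forall>n\<ge>N. ereal r' \<le> ereal (card ({j. k \<le> j \<and> P j} \<inter> {1..n}) / n)"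
  proof (intro exI[of _ "max (max N\<^sub>0 1) (nat \<lceil>k / (r - r')\<rceil>)"] allI impI)
    fix n assume n: "max (max N\<^sub>0 1) (nat \<lceil>k / (r - r')\<rceil>) \<le> n"
    have "k / (r - r') \<le> n" using n by linarith
    hence nk: "k \<le> (r - r') * n" using r' by (simp add: pos_divide_le_eq mult.commute)
    have "{j. j < n \<and> P j} \<subseteq> ({j. k \<le> j \<and> P j} \<inter> {1..n}) \<union> {..<k}" using k by auto
    hence "card {j. j < n \<and> P j} \<le> card (({j. k \<le> j \<and> P j} \<inter> {1..n}) \<union> {..<k})"
      by (intro card_mono) auto
    also have "\<dots> \<le> card ({j. k \<le> j \<and> P j} \<inter> {1..n}) + k"
      using card_Un_le[of "{j. k \<le> j \<and> P j} \<inter> {1..n}" "{..<k}"] by simp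
    finally have "r' * n \<le> card ({j. k \<le> j \<and> P j} \<inter> {1..n})"
      using visits[of n] n nk by (simp add: algebra_simps)
    thus "ereal r' \<le> ereal (card ({j. k \<le> j \<and> P j} \<inter> {1..n}) / n)"
      using n by (simp add: pos_le_divide_eq)
  qed
qed

section \<open>Stochastic matrices and the disagreement probability\<close>

definition disagreement :: "real^'k::finite^'k \<Rightarrow> real^'k \<Rightarrow> real^'k \<Rightarrow> real" where
  "disagreement P u v = 1 - (\<Sum>i\<in>UNIV. (P *v u) $ i * (P *v v) $ i)"

lemma matrix_vector_mult_e_vec_nth: "(P *v e_vec j) $ i = P $ i $ j"
  by (simp add: matrix_vector_mult_def e_vec_def axis_def if_distrib cong: if_cong)

lemma matrix_vector_mult_e_vec_sum: "P *v u = (\<Sum>j\<in>UNIV. u $ j *\<^sub>R (P *v e_vec j))"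
  by (simp add: vec_eq_iff matrix_vector_mult_def e_vec_def axis_def sum_distrib_left mult.commute
       if_distrib cong: if_cong)

lemma sum_matrix_vector_mult: "(\<Sum>s\<in>S. F s) *v (x::real^'n) = (\<Sum>s\<in>S. F s *v x)"
  by (induction S rule: infinite_finite_induct) (auto simp: matrix_vector_mult_add_rdistrib)

lemma scaleR_matrix_vector_mult: "(c *\<^sub>R F) *v (x::real^'n) = c *\<^sub>R (F *v x)"
  by (simp add: vec_eq_iff matrix_vector_mult_def sum_distrib_left mult.assoc)

lemma bounded_linear_column_sum: "bounded_linear (\<lambda>P::real^'k::finite^'k. \<Sum>i\<in>UNIV. (P *v v) $ i)"
proof -
  have "linear (\<lambda>P::real^'k::finite^'k. \<Sum>i\<in>UNIV. (P *v v) $ i)"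
    by (auto simp: linear_iff matrix_vector_mult_add_rdistrib scaleR_matrix_vector_mult
        sum.distrib sum_distrib_left)
  thus ?thesis using linear_conv_bounded_linear by blast
qed

lemma matrix_entry_le_norm: "\<bar>P $ i $ j\<bar> \<le> norm (P :: real^'n^'m)"
  using component_le_norm_cart[of "P $ i" j] Finite_Cartesian_Product.norm_nth_le[of P i] by linarith

lemma simplex1_sum: "v \<in> simplex1 \<Longrightarrow> (\<Sum>i\<in>UNIV. v $ i) = 1"
  unfolding simplex1_def by simp

lemma simplex1_nth_bounds:
  assumes "v \<in> simplex1"
  shows "0 \<le> v $ i" "v $ i \<le> 1"
proof -
  show "0 \<le> v $ i" using assms unfolding simplex1_def by auto
  have "v $ i \<le> (\<Sum>i\<in>UNIV. v $ i)" using assms unfolding simplex1_def by (intro member_le_sum) auto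
  thus "v $ i \<le> 1" using simplex1_sum[OF assms] by simp
qed

lemma e_vec_simplex1: "e_vec j \<in> simplex1"
  unfolding simplex1_def e_vec_def by (auto simp: axis_def sum.delta)

lemma col_stochastic_one: "col_stochastic (mat 1 :: 'k::finite mat)"
  unfolding col_stochastic_def by (auto simp: mat_def sum.delta)

lemma col_stochastic_mult:
  assumes "col_stochastic P" "col_stochastic Q"
  shows "col_stochastic (P ** Q)"
proof -
  have "(\<Sum>i\<in>UNIV. (P ** Q) $ i $ j) = (\<Sum>k\<in>UNIV. (\<Sum>i\<in>UNIV. P $ i $ k) * Q $ k $ j)" for j
    by (simp add: matrix_matrix_mult_def sum_distrib_right) (rule sum.swap)
  thus ?thesis
    using assms unfolding col_stochastic_def matrix_matrix_mult_def by (auto intro!: sum_nonneg)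
qed

lemma col_stochastic_simplex1:
  assumes "col_stochastic P" "u \<in> simplex1"
  shows "P *v u \<in> simplex1"
proof -
  have "(\<Sum>i\<in>UNIV. (P *v u) $ i) = (\<Sum>k\<in>UNIV. (\<Sum>i\<in>UNIV. P $ i $ k) * u $ k)"
    by (simp add: matrix_vector_mult_def sum_distrib_right) (rule sum.swap)
  thus ?thesis
    using assms unfolding col_stochastic_def simplex1_def matrix_vector_mult_def
    by (auto intro!: sum_nonneg)
qed

text \<open>Mass u_J is matched at most with y_J, and the remaining mass at most with max_{i \<noteq> J} y_i.\<close>
lemma inner_simplex1_le:
  fixes u y :: "real^'k::finite"
  assumes u: "u \<in> simplex1" and y: "y \<in> simplex1"
  shows "(\<Sum>i\<in>UNIV. u $ i * y $ i) \<le> max (y $ J) (1 - y $ J)"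
proof -
  have un: "\<And>i. u $ i \<ge> 0" "(\<Sum>i\<in>UNIV - {J}. u $ i) = 1 - u $ J"
    using u sum.remove[of UNIV J "\<lambda>i. u $ i"] unfolding simplex1_def by auto
  have yn: "\<And>i. y $ i \<ge> 0" "(\<Sum>i\<in>UNIV - {J}. y $ i) = 1 - y $ J"
    using y sum.remove[of UNIV J "\<lambda>i. y $ i"] unfolding simplex1_def by auto
  have yle: "y $ i \<le> 1 - y $ J" if "i \<noteq> J" for i
    using that yn member_le_sum[of i "UNIV - {J}" "\<lambda>i. y $ i"] by auto
  have "(\<Sum>i\<in>UNIV. u $ i * y $ i) = u $ J * y $ J + (\<Sum>i\<in>UNIV - {J}. u $ i * y $ i)"
    using sum.remove[of UNIV J "\<lambda>i. u $ i * y $ i"] by simp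
  also have "(\<Sum>i\<in>UNIV - {J}. u $ i * y $ i) \<le> (\<Sum>i\<in>UNIV - {J}. u $ i * (1 - y $ J))"
    using yle un(1) by (intro sum_mono mult_left_mono) auto
  also have "\<dots> = (1 - u $ J) * (1 - y $ J)" using un(2) by (simp add: sum_distrib_right[symmetric])
  also have "u $ J * y $ J + (1 - u $ J) * (1 - y $ J)
      \<le> u $ J * max (y $ J) (1 - y $ J) + (1 - u $ J) * max (y $ J) (1 - y $ J)"
    using un(1)[of J] simplex1_nth_bounds[OF u, of J] by (intro add_mono mult_left_mono) auto
  finally show ?thesis by (simp add: algebra_simps)
qed

lemma disagreement_ge_min:
  assumes "col_stochastic P"
  shows "disagreement P (e_vec j) (e_vec j') \<ge> min (P $ J $ j') (1 - P $ J $ j')"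
  using inner_simplex1_le[OF col_stochastic_simplex1[OF assms e_vec_simplex1[of j]]
      col_stochastic_simplex1[OF assms e_vec_simplex1[of j']], of J]
  by (simp add: disagreement_def matrix_vector_mult_e_vec_nth)

text \<open>The disagreement is affine in each argument, so a bound on the vertices of the simplex
  bounds it on the whole simplex.\<close>
lemma disagreement_ge_vertices:
  assumes w: "w \<in> simplex1" and w': "w' \<in> simplex1"
    and c: "\<And>j j'. disagreement C (e_vec j) (e_vec j') \<ge> c"
  shows "disagreement C w w' \<ge> c"
proof -
  have wn: "\<And>j. w $ j \<ge> 0" "\<And>j. w' $ j \<ge> 0" using w w' unfolding simplex1_def by auto
  define S where "S j j' = (\<Sum>i\<in>UNIV. C $ i $ j * C $ i $ j')" for j j'
  have "(\<Sum>i\<in>UNIV. (C *v w) $ i * (C *v w') $ i)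
      = (\<Sum>i\<in>UNIV. \<Sum>j\<in>UNIV. \<Sum>j'\<in>UNIV. (C $ i $ j * w $ j) * (C $ i $ j' * w' $ j'))"
    by (simp add: matrix_vector_mult_def sum_product)
  also have "\<dots> = (\<Sum>j\<in>UNIV. \<Sum>j'\<in>UNIV. \<Sum>i\<in>UNIV. (C $ i $ j * w $ j) * (C $ i $ j' * w' $ j'))"
    by (subst sum.swap) (intro sum.cong refl sum.swap)
  also have "\<dots> = (\<Sum>j\<in>UNIV. \<Sum>j'\<in>UNIV. w $ j * w' $ j' * S j j')"
    unfolding S_def by (simp add: sum_distrib_left mult_ac)
  finally have expand: "(\<Sum>i\<in>UNIV. (C *v w) $ i * (C *v w') $ i)
      = (\<Sum>j\<in>UNIV. \<Sum>j'\<in>UNIV. w $ j * w' $ j' * S j j')" .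
  have total: "(\<Sum>j\<in>UNIV. \<Sum>j'\<in>UNIV. w $ j * w' $ j') = 1"
    using simplex1_sum[OF w] simplex1_sum[OF w'] by (simp add: sum_product[symmetric])
  have "1 - S j j' \<ge> c" for j j'
    using c[of j j'] by (simp add: disagreement_def matrix_vector_mult_e_vec_nth S_def)
  hence "(\<Sum>j\<in>UNIV. \<Sum>j'\<in>UNIV. w $ j * w' $ j' * c)
      \<le> (\<Sum>j\<in>UNIV. \<Sum>j'\<in>UNIV. w $ j * w' $ j' * (1 - S j j'))"
    using wn by (intro sum_mono mult_left_mono) auto
  also have "\<dots> = disagreement C w w'"
    unfolding disagreement_def expand using total by (simp add: algebra_simps sum_subtractf)
  finally show ?thesis using total by (simp add: sum_distrib_right[symmetric])
qed

section \<open>Cocycles and pull-back blocks\<close>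

lemma cocycle_add: "cocycle A \<theta> (a + b) x = cocycle A \<theta> a ((\<theta> ^^ b) x) ** cocycle A \<theta> b x"
proof (induction a)
  case (Suc a)
  have "(\<theta> ^^ (a + b)) x = (\<theta> ^^ a) ((\<theta> ^^ b) x)" by (simp add: funpow_add)
  thus ?case using Suc by (simp add: matrix_mul_assoc)
qed simp

lemma col_stochastic_cocycle:
  "(\<And>n. col_stochastic (A ((\<theta> ^^ n) x))) \<Longrightarrow> col_stochastic (cocycle A \<theta> n x)"
  by (induction n) (auto intro: col_stochastic_mult col_stochastic_one)

lemma funpow_left_inverse:
  assumes inv: "\<And>x. x \<in> S \<Longrightarrow> \<theta>i (\<theta> x) = x" and cl: "\<And>x. x \<in> S \<Longrightarrow> \<theta> x \<in> S" and x: "x \<in> S"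
  shows "N \<le> n \<Longrightarrow> (\<theta>i ^^ N) ((\<theta> ^^ n) x) = (\<theta> ^^ (n - N)) x"
proof (induction N arbitrary: n)
  case (Suc N)
  have mem: "(\<theta> ^^ k) x \<in> S" for k using x cl by (induction k) auto
  have "(\<theta>i ^^ Suc N) ((\<theta> ^^ n) x) = \<theta>i ((\<theta> ^^ (n - N)) x)" using Suc by simp
  also have "\<dots> = \<theta>i (\<theta> ((\<theta> ^^ (n - Suc N)) x))"
    using Suc.prems by (simp add: Suc_diff_Suc[symmetric] Suc_le_lessD)
  also have "\<dots> = (\<theta> ^^ (n - Suc N)) x" using inv mem by simp
  finally show ?case .
qed simp

definition pullback :: "('a \<Rightarrow> 'a) \<Rightarrow> ('a \<Rightarrow> nat) \<Rightarrow> 'a \<Rightarrow> 'a" where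
  "pullback \<theta>i Nm \<omega> = (\<theta>i ^^ Nm \<omega>) \<omega>"

text \<open>C(\<epsilon>,\<omega>) above is the case i = l + 1.\<close>
primrec pullback_chain :: "(real \<Rightarrow> 'a \<Rightarrow> 'k::finite mat) \<Rightarrow> ('a \<Rightarrow> 'a) \<Rightarrow> ('a \<Rightarrow> 'a) \<Rightarrow> ('a \<Rightarrow> nat)
    \<Rightarrow> nat \<Rightarrow> real \<Rightarrow> 'a \<Rightarrow> 'k mat" where
  "pullback_chain A \<theta> \<theta>i Nm 0 \<epsilon> \<omega> = mat 1"
| "pullback_chain A \<theta> \<theta>i Nm (Suc i) \<epsilon> \<omega> =
     cocycle (A \<epsilon>) \<theta> (Nm \<omega>) (pullback \<theta>i Nm \<omega>) ** pullback_chain A \<theta> \<theta>i Nm i \<epsilon> (pullback \<theta>i Nm \<omega>)"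

primrec pullback_time :: "('a \<Rightarrow> 'a) \<Rightarrow> ('a \<Rightarrow> nat) \<Rightarrow> nat \<Rightarrow> 'a \<Rightarrow> nat" where
  "pullback_time \<theta>i Nm 0 \<omega> = 0"
| "pullback_time \<theta>i Nm (Suc i) \<omega> = Nm \<omega> + pullback_time \<theta>i Nm i (pullback \<theta>i Nm \<omega>)"

lemma cocycle_eq_pullback_chain_mult:
  assumes inv: "\<And>x. x \<in> S \<Longrightarrow> \<theta>i (\<theta> x) = x" and cl: "\<And>x. x \<in> S \<Longrightarrow> \<theta> x \<in> S" and x: "x \<in> S"
  shows "pullback_time \<theta>i Nm i ((\<theta> ^^ n) x) \<le> n \<Longrightarrow>
    cocycle (A \<epsilon>) \<theta> n x = pullback_chain A \<theta> \<theta>i Nm i \<epsilon> ((\<theta> ^^ n) x) **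
      cocycle (A \<epsilon>) \<theta> (n - pullback_time \<theta>i Nm i ((\<theta> ^^ n) x)) x"
proof (induction i arbitrary: n)
  case (Suc i)
  define N where "N = Nm ((\<theta> ^^ n) x)"
  have Nn: "N \<le> n" using Suc.prems by (simp add: N_def)
  have pb: "pullback \<theta>i Nm ((\<theta> ^^ n) x) = (\<theta> ^^ (n - N)) x"
    unfolding pullback_def N_def using funpow_left_inverse[OF inv cl x Nn] by (simp add: N_def)
  have "cocycle (A \<epsilon>) \<theta> n x = cocycle (A \<epsilon>) \<theta> N ((\<theta> ^^ (n - N)) x) ** cocycle (A \<epsilon>) \<theta> (n - N) x"
    using cocycle_add[of "A \<epsilon>" \<theta> N "n - N" x] Nn by simp
  moreover have "pullback_time \<theta>i Nm i ((\<theta> ^^ (n - N)) x) \<le> n - N"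
    using Suc.prems by (simp add: N_def[symmetric] pb[symmetric])
  ultimately show ?case
    using Suc.IH by (simp add: pb N_def[symmetric] matrix_mul_assoc)
qed simp

section \<open>Leading-order expansion of a smooth family of stochastic matrices\<close>

lemma power_expansion_coeff_nonneg:
  fixes g :: "real \<Rightarrow> real"
  assumes expansion: "\<And>\<eta>. \<eta> > 0 \<Longrightarrow> \<exists>d>0. \<forall>x. 0 < x \<and> x < d \<longrightarrow> \<bar>g x - c * x ^ l\<bar> \<le> \<eta> * x ^ l"
    and nonneg: "\<And>x. 0 < x \<Longrightarrow> x < e \<Longrightarrow> 0 \<le> g x" and e: "0 < e"
  shows "0 \<le> c"
proof (rule ccontr)
  assume c: "\<not> 0 \<le> c"
  then obtain d where d: "d > 0" "\<forall>x. 0 < x \<and> x < d \<longrightarrow> \<bar>g x - c * x ^ l\<bar> \<le> (- c / 2) * x ^ l"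
    using expansion[of "- c / 2"] by auto
  define x where "x = min d e / 2"
  have x: "0 < x" "x < d" "x < e" using d e by (auto simp: x_def)
  have "g x \<le> (c / 2) * x ^ l" using d(2) x by (auto simp: abs_le_iff algebra_simps)
  moreover have "(c / 2) * x ^ l < 0" using c x by (simp add: mult_neg_pos)
  ultimately show False using nonneg[OF x(1,3)] by linarith
qed

lemma min_ge_power_of_expansion:
  fixes y :: "'b \<Rightarrow> real \<Rightarrow> real"
  assumes a: "a > 0" and d: "d > 0" and l: "1 \<le> l"
    and y: "\<And>j x. 0 < x \<Longrightarrow> x < d \<Longrightarrow> \<bar>y j x - (1 - a * x ^ l)\<bar> \<le> a / 2 * x ^ l"
  shows "\<exists>d'>0. \<forall>j x. 0 < x \<and> x \<le> d' \<longrightarrow> min (y j x) (1 - y j x) \<ge> a / 2 * x ^ l"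
proof (intro exI[of _ "min (d / 2) (min 1 (1 / (2 * a)))"] conjI allI impI)
  show "0 < min (d / 2) (min 1 (1 / (2 * a)))" using a d by simp
  fix j x assume x: "0 < x \<and> x \<le> min (d / 2) (min 1 (1 / (2 * a)))"
  have "x ^ l \<le> x" using x l by (intro power_decreasing[where n=1, simplified]) auto
  also have "2 * a * x \<le> 1" using x a by (simp add: field_simps)
  hence "x \<le> 1 / (2 * a)" using a by (simp add: field_simps)
  finally have "2 * (a * x ^ l) \<le> 1" using a by (simp add: field_simps)
  moreover have "\<bar>y j x - (1 - a * x ^ l)\<bar> \<le> (a * x ^ l) / 2" using y[of x j] x d by simp
  ultimately show "min (y j x) (1 - y j x) \<ge> a / 2 * x ^ l"
    unfolding abs_le_iff by simp
qed

context
  fixes C :: "real \<Rightarrow> real^'k::finite^'k" and q :: "nat \<Rightarrow> real^'k"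
    and e :: real and m l :: nat and J :: 'k
  assumes C_Cm: "Cm_on m C {0..e}" and e: "0 < e" and l: "1 \<le> l" "l \<le> m"
    and C_stochastic: "\<And>x. x \<in> {0..e} \<Longrightarrow> col_stochastic (C x)"
    and hder_column: "\<And>k j. k \<le> l \<Longrightarrow> hder k C 0 *v e_vec j = q k"
    and q_0: "q 0 = e_vec J" and q_vanish: "\<And>k. 1 \<le> k \<Longrightarrow> k < l \<Longrightarrow> q k = 0"
begin

lemma column_taylor_expansion:
  assumes "\<eta> > 0"
  shows "\<exists>d>0. \<forall>x. 0 < x \<and> x < d \<longrightarrow>
    (\<forall>i j. \<bar>C x $ i $ j - (e_vec J $ i + x ^ l / fact l * q l $ i)\<bar> \<le> \<eta> * x ^ l)"
proof -
  define T where "T x = (\<Sum>k\<le>l. (x ^ k / fact k) *\<^sub>R hder k C 0)" for x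
  obtain d where d: "d > 0" "\<And>x. 0 < x \<and> x < d \<Longrightarrow> norm (C x - T x) \<le> \<eta> * x ^ l"
    using taylor_peano_hder[OF C_Cm e l(2) assms] unfolding T_def by blast
  have "T x *v e_vec j = (\<Sum>k\<le>l. (x ^ k / fact k) *\<^sub>R q k)" for x j
    by (simp add: T_def sum_matrix_vector_mult scaleR_matrix_vector_mult hder_column)
  also have "\<dots> x = (\<Sum>k\<in>{0, l}. (x ^ k / fact k) *\<^sub>R q k)" for x
    using q_vanish by (intro sum.mono_neutral_right) auto
  finally have T: "T x *v e_vec j = e_vec J + (x ^ l / fact l) *\<^sub>R q l" for x j
    using l q_0 by simp
  have eq: "C x $ i $ j - (e_vec J $ i + x ^ l / fact l * q l $ i) = (C x - T x) $ i $ j" for x i j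
  proof -
    have "T x $ i $ j = e_vec J $ i + x ^ l / fact l * q l $ i"
      using arg_cong[OF T[of x j], of "\<lambda>v. v $ i"] by (simp add: matrix_vector_mult_e_vec_nth)
    thus ?thesis by simp
  qed
  show ?thesis
  proof (intro exI[of _ d] conjI allI impI)
    fix x i j assume "0 < x \<and> x < d"
    thus "\<bar>C x $ i $ j - (e_vec J $ i + x ^ l / fact l * q l $ i)\<bar> \<le> \<eta> * x ^ l"
      unfolding eq using matrix_entry_le_norm[of "C x - T x" i j] d(2)[of x] by linarith
  qed (rule d(1))
qed

lemma sum_leading_coeff_eq_0: "(\<Sum>i\<in>UNIV. q l $ i) = 0"
proof -
  have "(\<Sum>i\<in>UNIV. (C x *v e_vec J) $ i) = 1" if "x \<in> {0..e}" for x
    using simplex1_sum[OF col_stochastic_simplex1[OF C_stochastic[OF that] e_vec_simplex1]] .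
  hence "(\<Sum>i\<in>UNIV. (hder l C 0 *v e_vec J) $ i) = 0"
    using hder_linear_const[OF C_Cm e bounded_linear_column_sum[of "e_vec J"], where c=1 and t=l] l
    by simp
  thus ?thesis using hder_column[of l J] by simp
qed

lemma leading_coeff_nonneg_off_diag:
  assumes "i \<noteq> J"
  shows "0 \<le> q l $ i"
proof -
  have "0 \<le> q l $ i / fact l"
  proof (rule power_expansion_coeff_nonneg[OF _ _ e])
    fix \<eta> :: real assume "\<eta> > 0"
    then obtain d where "d > 0" and d: "\<forall>x. 0 < x \<and> x < d \<longrightarrow>
        (\<forall>i j. \<bar>C x $ i $ j - (e_vec J $ i + x ^ l / fact l * q l $ i)\<bar> \<le> \<eta> * x ^ l)"
      using column_taylor_expansion by blast
    have eq: "e_vec J $ i + x ^ l / fact l * q l $ i = q l $ i / fact l * x ^ l" for x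
      using assms by (simp add: e_vec_def axis_def)
    show "\<exists>d>0. \<forall>x. 0 < x \<and> x < d \<longrightarrow> \<bar>C x $ i $ J - q l $ i / fact l * x ^ l\<bar> \<le> \<eta> * x ^ l"
    proof (intro exI[of _ d] conjI allI impI)
      fix x assume "0 < x \<and> x < d"
      thus "\<bar>C x $ i $ J - q l $ i / fact l * x ^ l\<bar> \<le> \<eta> * x ^ l"
        using d[rule_format, of x i J] by (simp only: eq)
    qed (rule \<open>d > 0\<close>)
  next
    fix x :: real assume "0 < x" "x < e"
    thus "0 \<le> C x $ i $ J" using C_stochastic[of x] by (simp add: col_stochastic_def)
  qed
  moreover have "(0::real) < fact l" by simp
  ultimately show ?thesis by (simp add: zero_le_divide_iff)
qed

lemma leading_coeff_diag_neg:
  assumes "q l \<noteq> 0"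
  shows "q l $ J < 0"
proof (rule ccontr)
  assume "\<not> q l $ J < 0"
  moreover have rest: "q l $ J = - (\<Sum>i\<in>UNIV - {J}. q l $ i)"
    using sum_leading_coeff_eq_0 sum.remove[of UNIV J "\<lambda>i. q l $ i"] by simp
  moreover have "(\<Sum>i\<in>UNIV - {J}. q l $ i) \<ge> 0"
    using leading_coeff_nonneg_off_diag by (intro sum_nonneg) auto
  ultimately have "(\<Sum>i\<in>UNIV - {J}. q l $ i) = 0" "q l $ J = 0" by auto
  hence "q l $ i = 0" for i
    using sum_nonneg_eq_0_iff[of "UNIV - {J}" "\<lambda>i. q l $ i"] leading_coeff_nonneg_off_diag
    by (cases "i = J") auto
  thus False using assms by (simp add: vec_eq_iff)
qed

lemma disagreement_ge_power:
  assumes "q l \<noteq> 0"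
  shows "\<exists>c>0. \<exists>d>0. \<forall>x\<in>{0..d}. \<forall>j j'. disagreement (C x) (e_vec j) (e_vec j') \<ge> c * x ^ l"
proof -
  define a where "a = - q l $ J / fact l"
  have a: "a > 0" using leading_coeff_diag_neg[OF assms] by (simp add: a_def field_simps)
  obtain d where d: "d > 0" "\<forall>x. 0 < x \<and> x < d \<longrightarrow>
      (\<forall>i j. \<bar>C x $ i $ j - (e_vec J $ i + x ^ l / fact l * q l $ i)\<bar> \<le> a / 2 * x ^ l)"
    using column_taylor_expansion[of "a / 2"] a by auto
  have "\<bar>C x $ J $ j - (1 - a * x ^ l)\<bar> \<le> a / 2 * x ^ l" if "0 < x" "x < d" for j x
  proof -
    have "e_vec J $ J + x ^ l / fact l * q l $ J = 1 - a * x ^ l"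
      by (simp add: a_def e_vec_def axis_def)
    thus ?thesis using d(2) that by metis
  qed
  then obtain d' where d': "d' > 0"
    "\<forall>j x. 0 < x \<and> x \<le> d' \<longrightarrow> min (C x $ J $ j) (1 - C x $ J $ j) \<ge> a / 2 * x ^ l"
    using min_ge_power_of_expansion[OF a d(1) l(1), of "\<lambda>j x. C x $ J $ j"] by blast
  have "disagreement (C x) (e_vec j) (e_vec j') \<ge> a / 2 * x ^ l"
    if x: "x \<in> {0..min d' e}" for x j j'
  proof -
    have stoch: "col_stochastic (C x)" using x C_stochastic by auto
    have "min (C x $ J $ j') (1 - C x $ J $ j') \<ge> a / 2 * x ^ l"
    proof (cases "x = 0")
      case True
      thus ?thesis
        using simplex1_nth_bounds[OF col_stochastic_simplex1[OF stoch e_vec_simplex1[of j']], of J] l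
        by (simp add: matrix_vector_mult_e_vec_nth zero_power)
    qed (use d' x in auto)
    thus ?thesis using disagreement_ge_min[OF stoch, where j=j and j'=j' and J=J] by linarith
  qed
  moreover have "a / 2 > 0" "min d' e > 0" using a d'(1) e by auto
  ultimately show ?thesis by blast
qed

end

lemma closure_Rats_Icc: "e > 0 \<Longrightarrow> closure ({0..e} \<inter> \<rat>) = {0..(e::real)}"
  using closure_convex_Int_superset[of "{0..e}" \<rat>] Rats_closure_real by auto

lemma continuous_le_from_Rats:
  fixes f g :: "real \<Rightarrow> real"
  assumes "continuous_on {0..e} f" "continuous_on {0..e} g" "e > 0"
    and "\<And>x. x \<in> {0..e} \<inter> \<rat> \<Longrightarrow> f x \<le> g x" and "x \<in> {0..e}"
  shows "f x \<le> g x"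
  using continuous_ge_on_closure[where S="{0..e} \<inter> \<rat>" and f="\<lambda>x. g x - f x" and a=0]
    assms closure_Rats_Icc[OF assms(3)] by (auto intro: continuous_on_diff)

declare qvec.simps [simp del]

section \<open>Perturbations of a synchronised network\<close>

locale perturbed_sync =
  fixes M :: "'a measure" and \<theta> \<theta>i :: "'a \<Rightarrow> 'a" and A :: "real \<Rightarrow> 'a \<Rightarrow> real^'k::finite^'k"
    and J :: "'a \<Rightarrow> 'k" and Nm :: "'a \<Rightarrow> nat" and m :: nat and e0 :: real
  assumes mds: "invertible_mds M \<theta> \<theta>i"
    and pullback_sync: "AE \<omega> in M. \<forall>n j. n \<ge> Nm \<omega> \<longrightarrow>
                     cocycle (A 0) \<theta> n ((\<theta>i ^^ n) \<omega>) *v e_vec j = e_vec (J \<omega>)"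
    and MRN: "\<And>\<epsilon>. \<epsilon> \<ge> 0 \<Longrightarrow> MRN M (A \<epsilon>)"
    and e0: "e0 > 0"
    and Cm_AE: "AE \<omega> in M. Cm_on m (\<lambda>\<epsilon>. A \<epsilon> \<omega>) {0..e0}"
    and Nm_measurable: "Nm \<in> M \<rightarrow>\<^sub>M count_space UNIV"
begin

lemma prob_space_M: "prob_space M" using mds by (simp add: invertible_mds_def)
lemma measurable_theta: "\<theta> \<in> M \<rightarrow>\<^sub>M M" using mds by (simp add: invertible_mds_def)
lemma measurable_theta_inv: "\<theta>i \<in> M \<rightarrow>\<^sub>M M" using mds by (simp add: invertible_mds_def)
lemma theta_inv_theta: "x \<in> space M \<Longrightarrow> \<theta>i (\<theta> x) = x" using mds by (simp add: invertible_mds_def)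
lemma distr_theta: "distr M M \<theta> = M" using mds by (simp add: invertible_mds_def)
lemma theta_ergodic: "\<forall>A\<in>sets M. \<theta> -` A \<inter> space M = A \<longrightarrow> measure M A = 0 \<or> measure M A = 1"
  using mds by (simp add: invertible_mds_def)
lemma theta_space: "x \<in> space M \<Longrightarrow> \<theta> x \<in> space M"
  using measurable_theta by (simp add: measurable_space)

lemma distr_theta_inv: "distr M M \<theta>i = M"
proof (rule measure_eqI)
  fix X assume "X \<in> sets (distr M M \<theta>i)"
  hence X: "X \<in> sets M" by simp
  have pre: "\<theta>i -` X \<inter> space M \<in> sets M" using measurable_theta_inv X by (simp add: measurable_sets)
  have "\<theta> -` (\<theta>i -` X \<inter> space M) \<inter> space M = X"
    using theta_inv_theta theta_space sets.sets_into_space[OF X] by auto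
  hence "emeasure M X = emeasure (distr M M \<theta>) (\<theta>i -` X \<inter> space M)"
    using measurable_theta pre by (simp add: emeasure_distr)
  thus "emeasure (distr M M \<theta>i) X = emeasure M X"
    using measurable_theta_inv X by (simp add: emeasure_distr distr_theta)
qed simp

text \<open>An MRN is stochastic almost everywhere only for each fixed \<epsilon>, so regularity asks for it at
  rational \<epsilon>; continuity in \<epsilon> extends it to [0,e0].\<close>
definition regular :: "'a \<Rightarrow> bool" where
  "regular \<omega> \<longleftrightarrow> \<omega> \<in> space M \<and> Cm_on m (\<lambda>\<epsilon>. A \<epsilon> \<omega>) {0..e0} \<and>
     (\<forall>q::rat. 0 \<le> q \<longrightarrow> col_stochastic (A (of_rat q) \<omega>)) \<and>
     (\<forall>n j. n \<ge> Nm \<omega> \<longrightarrow> cocycle (A 0) \<theta> n ((\<theta>i ^^ n) \<omega>) *v e_vec j = e_vec (J \<omega>))"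

definition typical :: "'a \<Rightarrow> bool" where
  "typical \<omega> \<longleftrightarrow> (\<forall>a b. regular ((\<theta> ^^ a) ((\<theta>i ^^ b) \<omega>)))"

lemma AE_regular: "AE \<omega> in M. regular \<omega>"
proof -
  have "AE \<omega> in M. 0 \<le> q \<longrightarrow> col_stochastic (A (of_rat q) \<omega>)" for q :: rat
    using MRN[of "of_rat q"] unfolding MRN_def by (cases "0 \<le> q") auto
  hence "AE \<omega> in M. \<forall>q::rat. 0 \<le> q \<longrightarrow> col_stochastic (A (of_rat q) \<omega>)"
    by (simp add: AE_all_countable)
  thus ?thesis using pullback_sync Cm_AE unfolding regular_def by auto
qed

lemma AE_typical: "AE \<omega> in M. typical \<omega>"
proof -
  have "AE \<omega> in M. regular ((\<theta> ^^ a) ((\<theta>i ^^ b) \<omega>))" for a b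
    using AE_funpow[OF measurable_theta_inv distr_theta_inv
        AE_funpow[OF measurable_theta distr_theta AE_regular]] .
  thus ?thesis unfolding typical_def by (simp add: AE_all_countable)
qed

lemma typical_regular: "typical \<omega> \<Longrightarrow> regular \<omega>"
  unfolding typical_def by (metis funpow_0)

lemma typical_space: "typical \<omega> \<Longrightarrow> \<omega> \<in> space M"
  using typical_regular regular_def by blast

lemma typical_theta: "typical \<omega> \<Longrightarrow> typical (\<theta> \<omega>)"
  unfolding typical_def
proof (intro allI)
  fix a b assume \<omega>: "\<forall>a b. regular ((\<theta> ^^ a) ((\<theta>i ^^ b) \<omega>))"
  have "\<omega> \<in> space M" using \<omega>[rule_format, of 0 0] by (simp add: regular_def)
  show "regular ((\<theta> ^^ a) ((\<theta>i ^^ b) (\<theta> \<omega>)))"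
  proof (cases b)
    case 0
    thus ?thesis using \<omega>[rule_format, of "Suc a" 0] by (simp add: funpow_swap1)
  next
    case (Suc b')
    have "(\<theta>i ^^ b) (\<theta> \<omega>) = (\<theta>i ^^ b') \<omega>"
      using Suc theta_inv_theta[OF \<open>\<omega> \<in> space M\<close>] by (simp only: funpow_Suc_right comp_apply)
    thus ?thesis using \<omega> by simp
  qed
qed

lemma typical_funpow_theta: "typical \<omega> \<Longrightarrow> typical ((\<theta> ^^ n) \<omega>)"
  by (induction n) (auto intro: typical_theta)

lemma typical_pullback: "typical \<omega> \<Longrightarrow> typical (pullback \<theta>i Nm \<omega>)"
  unfolding typical_def pullback_def by (metis funpow_add comp_apply)

lemma regular_col_stochastic:
  assumes "regular \<omega>" "\<epsilon> \<in> {0..e0}"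
  shows "col_stochastic (A \<epsilon> \<omega>)"
proof -
  have "continuous_on {0..e0} (\<lambda>\<epsilon>. A \<epsilon> \<omega>)"
    using assms(1) Cm_on_continuous unfolding regular_def by blast
  hence cont: "continuous_on {0..e0} (\<lambda>\<epsilon>. A \<epsilon> \<omega> $ i $ j)" for i j
    by (intro continuous_on_component)
  have rat: "col_stochastic (A r \<omega>)" if "r \<in> {0..e0} \<inter> \<rat>" for r
    using that assms(1) unfolding regular_def by (auto elim!: Rats_cases)
  have "0 \<le> A \<epsilon> \<omega> $ i $ j" for i j
    by (rule continuous_le_from_Rats[OF continuous_on_const cont e0 _ assms(2)])
       (use rat in \<open>auto simp: col_stochastic_def\<close>)
  moreover have "(\<Sum>i\<in>UNIV. A \<epsilon> \<omega> $ i $ j) = 1" for j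
  proof -
    have sum_cont: "continuous_on {0..e0} (\<lambda>\<epsilon>. \<Sum>i\<in>UNIV. A \<epsilon> \<omega> $ i $ j)"
      using cont by (intro continuous_on_sum)
    have "1 \<le> (\<Sum>i\<in>UNIV. A \<epsilon> \<omega> $ i $ j)"
      by (rule continuous_le_from_Rats[OF continuous_on_const sum_cont e0 _ assms(2)])
         (use rat in \<open>auto simp: col_stochastic_def\<close>)
    moreover have "(\<Sum>i\<in>UNIV. A \<epsilon> \<omega> $ i $ j) \<le> 1"
      by (rule continuous_le_from_Rats[OF sum_cont continuous_on_const e0 _ assms(2)])
         (use rat in \<open>auto simp: col_stochastic_def\<close>)
    ultimately show ?thesis by simp
  qed
  ultimately show ?thesis unfolding col_stochastic_def by auto
qed

lemma Cm_on_cocycle: "typical \<omega> \<Longrightarrow> Cm_on m (\<lambda>\<epsilon>. cocycle (A \<epsilon>) \<theta> n \<omega>) {0..e0}"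
proof (induction n)
  case (Suc n)
  have "Cm_on m (\<lambda>\<epsilon>. A \<epsilon> ((\<theta> ^^ n) \<omega>)) {0..e0}"
    using typical_regular[OF typical_funpow_theta[OF Suc.prems]] unfolding regular_def by blast
  thus ?case using Suc by (simp add: Cm_on_matrix_mult)
qed (simp add: Cm_on_const)

lemma typical_col_stochastic_cocycle:
  "typical \<omega> \<Longrightarrow> \<epsilon> \<in> {0..e0} \<Longrightarrow> col_stochastic (cocycle (A \<epsilon>) \<theta> n \<omega>)"
  by (intro col_stochastic_cocycle regular_col_stochastic typical_regular typical_funpow_theta)

lemma Cm_on_pullback_chain: "typical \<omega> \<Longrightarrow> Cm_on m (\<lambda>\<epsilon>. pullback_chain A \<theta> \<theta>i Nm i \<epsilon> \<omega>) {0..e0}"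
  by (induction i arbitrary: \<omega>)
     (auto simp: Cm_on_const intro!: Cm_on_matrix_mult Cm_on_cocycle typical_pullback)

lemma col_stochastic_pullback_chain:
  "typical \<omega> \<Longrightarrow> \<epsilon> \<in> {0..e0} \<Longrightarrow> col_stochastic (pullback_chain A \<theta> \<theta>i Nm i \<epsilon> \<omega>)"
  by (induction i arbitrary: \<omega>)
     (auto intro!: col_stochastic_mult typical_col_stochastic_cocycle typical_pullback
           simp: col_stochastic_one)

lemma pullback_block_collapses:
  assumes "regular \<omega>"
  shows "cocycle (A 0) \<theta> (Nm \<omega>) (pullback \<theta>i Nm \<omega>) *v v = (\<Sum>i\<in>UNIV. v $ i) *\<^sub>R e_vec (J \<omega>)"
proof -
  have "cocycle (A 0) \<theta> (Nm \<omega>) (pullback \<theta>i Nm \<omega>) *v e_vec j = e_vec (J \<omega>)" for j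
    using assms unfolding regular_def pullback_def by auto
  thus ?thesis by (subst matrix_vector_mult_e_vec_sum) (simp add: scaleR_sum_left)
qed

lemma column_sum_pullback_chain:
  assumes "typical \<omega>" "\<epsilon> \<in> {0..e0}"
  shows "(\<Sum>r\<in>UNIV. (pullback_chain A \<theta> \<theta>i Nm i \<epsilon> \<omega> *v e_vec j) $ r) = 1"
  using simplex1_sum[OF col_stochastic_simplex1[OF col_stochastic_pullback_chain[OF assms]
        e_vec_simplex1]] .

lemma hder_pullback_chain_0:
  assumes "typical \<omega>"
  shows "hder 0 (\<lambda>\<epsilon>. pullback_chain A \<theta> \<theta>i Nm (Suc i) \<epsilon> \<omega>) 0 *v e_vec j = qvec A \<theta> \<theta>i J Nm 0 \<omega>"
  using pullback_block_collapses[OF typical_regular[OF assms],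
      of "pullback_chain A \<theta> \<theta>i Nm i 0 (pullback \<theta>i Nm \<omega>) *v e_vec j"]
    column_sum_pullback_chain[OF typical_pullback[OF assms], of 0 i j] e0
  by (subst qvec.simps) (simp add: matrix_vector_mul_assoc[symmetric])

lemma hder_pullback_chain_Suc:
  assumes \<omega>: "typical \<omega>" and t: "1 \<le> t" "t \<le> m"
    and IH: "\<And>s. s < t \<Longrightarrow> hder s (\<lambda>\<epsilon>. pullback_chain A \<theta> \<theta>i Nm i \<epsilon> (pullback \<theta>i Nm \<omega>)) 0 *v e_vec j
                = qvec A \<theta> \<theta>i J Nm s (pullback \<theta>i Nm \<omega>)"
  shows "hder t (\<lambda>\<epsilon>. pullback_chain A \<theta> \<theta>i Nm (Suc i) \<epsilon> \<omega>) 0 *v e_vec j = qvec A \<theta> \<theta>i J Nm t \<omega>"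
proof -
  define w where "w = pullback \<theta>i Nm \<omega>"
  have w: "typical w" using typical_pullback[OF \<omega>] by (simp add: w_def)
  define P where "P = (\<lambda>\<epsilon>. cocycle (A \<epsilon>) \<theta> (Nm \<omega>) w)"
  define C where "C = (\<lambda>\<epsilon>. pullback_chain A \<theta> \<theta>i Nm i \<epsilon> w)"
  have leibniz: "hder t (\<lambda>\<epsilon>. P \<epsilon> ** C \<epsilon>) 0
      = (\<Sum>s\<le>t. real (t choose s) *\<^sub>R (hder (t - s) P 0 ** hder s C 0))"
    unfolding P_def C_def using Cm_on_cocycle[OF w] Cm_on_pullback_chain[OF w] e0 t
    by (intro hder_matrix_mult) auto
  txt \<open>The columns of C(\<epsilon>) sum to 1, so those of its derivatives sum to 0 and are killed by
    the collapsing block P(0).\<close>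
  have top_term: "hder 0 P 0 *v (hder t C 0 *v e_vec j) = 0"
  proof -
    have "(\<Sum>r\<in>UNIV. (hder t C 0 *v e_vec j) $ r) = 0"
      unfolding C_def
    proof (rule hder_linear_const[OF Cm_on_pullback_chain[OF w] e0 bounded_linear_column_sum _ t])
      fix \<epsilon> :: real assume "\<epsilon> \<in> {0..e0}"
      thus "(\<Sum>r\<in>UNIV. (pullback_chain A \<theta> \<theta>i Nm i \<epsilon> w *v e_vec j) $ r) = 1"
        by (rule column_sum_pullback_chain[OF w])
    qed
    thus ?thesis
      using pullback_block_collapses[OF typical_regular[OF \<omega>]] by (simp add: P_def w_def)
  qed
  have "hder t (\<lambda>\<epsilon>. pullback_chain A \<theta> \<theta>i Nm (Suc i) \<epsilon> \<omega>) 0 *v e_vec j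
      = (\<Sum>s\<le>t. real (t choose s) *\<^sub>R (hder (t - s) P 0 *v (hder s C 0 *v e_vec j)))"
    unfolding P_def C_def w_def
    using leibniz[unfolded P_def C_def w_def]
    by (simp add: sum_matrix_vector_mult scaleR_matrix_vector_mult matrix_vector_mul_assoc)
  also have "\<dots> = (\<Sum>s<t. real (t choose s) *\<^sub>R (hder (t - s) P 0 *v (hder s C 0 *v e_vec j)))"
    using top_term by (simp add: lessThan_Suc_atMost[symmetric])
  also have "\<dots> = (\<Sum>s<t. real (t choose s) *\<^sub>R (Pder A \<theta> (t - s) (Nm \<omega>) w *v qvec A \<theta> \<theta>i J Nm s w))"
    using IH unfolding C_def w_def by (intro sum.cong refl) (simp add: Pder_def P_def w_def)
  also have "\<dots> = qvec A \<theta> \<theta>i J Nm t \<omega>"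
    using t by (subst (2) qvec.simps) (simp add: w_def pullback_def Let_def)
  finally show ?thesis .
qed

lemma hder_pullback_chain_eq_qvec:
  "typical \<omega> \<Longrightarrow> t \<le> i \<Longrightarrow> t \<le> m \<Longrightarrow>
   hder t (\<lambda>\<epsilon>. pullback_chain A \<theta> \<theta>i Nm (Suc i) \<epsilon> \<omega>) 0 *v e_vec j = qvec A \<theta> \<theta>i J Nm t \<omega>"
proof (induction i arbitrary: \<omega> t)
  case 0 thus ?case using hder_pullback_chain_0[OF 0(1), where i=0 and j=j] by simp
next
  case (Suc i)
  show ?case
  proof (cases "t = 0")
    case True thus ?thesis using hder_pullback_chain_0[OF Suc.prems(1), where i="Suc i" and j=j] by simp
  next
    case False
    thus ?thesis using Suc.prems by (intro hder_pullback_chain_Suc Suc.IH typical_pullback) auto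
  qed
qed

lemma pullback_chain_disagreement_ge_power:
  assumes \<omega>: "typical \<omega>" and l: "1 \<le> l" "l \<le> m"
    and D: "\<omega> \<in> Omega_l M A \<theta> \<theta>i J Nm (l - 1) - Omega_l M A \<theta> \<theta>i J Nm l"
  shows "\<exists>c>0. \<exists>d>0. \<forall>x\<in>{0..d}. \<forall>j j'.
    disagreement (pullback_chain A \<theta> \<theta>i Nm (Suc l) x \<omega>) (e_vec j) (e_vec j') \<ge> c * x ^ l"
proof (rule disagreement_ge_power[where q="\<lambda>k. qvec A \<theta> \<theta>i J Nm k \<omega>" and J="J \<omega>"])
  show "Cm_on m (\<lambda>x. pullback_chain A \<theta> \<theta>i Nm (Suc l) x \<omega>) {0..e0}"
    by (rule Cm_on_pullback_chain[OF \<omega>])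
  show "\<And>x. x \<in> {0..e0} \<Longrightarrow> col_stochastic (pullback_chain A \<theta> \<theta>i Nm (Suc l) x \<omega>)"
    by (rule col_stochastic_pullback_chain[OF \<omega>])
  show "\<And>k j. k \<le> l \<Longrightarrow> hder k (\<lambda>x. pullback_chain A \<theta> \<theta>i Nm (Suc l) x \<omega>) 0 *v e_vec j
      = qvec A \<theta> \<theta>i J Nm k \<omega>"
    using hder_pullback_chain_eq_qvec[OF \<omega>] l by simp
  show "qvec A \<theta> \<theta>i J Nm 0 \<omega> = e_vec (J \<omega>)" by (simp add: qvec.simps)
  show "\<And>k. 1 \<le> k \<Longrightarrow> k < l \<Longrightarrow> qvec A \<theta> \<theta>i J Nm k \<omega> = 0"
    using D unfolding Omega_l_def by auto
  show "qvec A \<theta> \<theta>i J Nm l \<omega> \<noteq> 0"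
  proof
    assume ql: "qvec A \<theta> \<theta>i J Nm l \<omega> = 0"
    have "qvec A \<theta> \<theta>i J Nm s \<omega> = 0" if "s \<in> {1..l}" for s
      using that ql D unfolding Omega_l_def by (cases "s = l") auto
    hence "\<omega> \<in> Omega_l M A \<theta> \<theta>i J Nm l" using D unfolding Omega_l_def by auto
    thus False using D by blast
  qed
qed (use e0 l in auto)

lemma measurable_pullback: "pullback \<theta>i Nm \<in> M \<rightarrow>\<^sub>M M"
  unfolding pullback_def
  by (rule measurable_compose_countable[OF measurable_funpow[OF measurable_theta_inv] Nm_measurable])

lemma borel_measurable_cocycle_entry:
  "\<epsilon> \<ge> 0 \<Longrightarrow> (\<lambda>\<omega>. cocycle (A \<epsilon>) \<theta> n \<omega> $ a $ b) \<in> borel_measurable M"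
proof (induction n arbitrary: a b)
  case (Suc n)
  have entry: "(\<lambda>\<omega>. A \<epsilon> \<omega> $ a $ c) \<in> borel_measurable M" for c
    using MRN[OF Suc.prems] unfolding MRN_def by blast
  have "(\<lambda>\<omega>. A \<epsilon> ((\<theta> ^^ n) \<omega>) $ a $ c) \<in> borel_measurable M" for c
    using measurable_compose[OF measurable_funpow[OF measurable_theta] entry] by simp
  thus ?case using Suc by (simp add: matrix_matrix_mult_def)
qed (simp add: mat_def)

lemma borel_measurable_pullback_chain_entry:
  "\<epsilon> \<ge> 0 \<Longrightarrow> (\<lambda>\<omega>. pullback_chain A \<theta> \<theta>i Nm i \<epsilon> \<omega> $ a $ b) \<in> borel_measurable M"
proof (induction i arbitrary: a b)
  case (Suc i)
  have "(\<lambda>\<omega>. cocycle (A \<epsilon>) \<theta> (Nm \<omega>) (pullback \<theta>i Nm \<omega>) $ a $ c) \<in> borel_measurable M" for c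
  proof (rule measurable_compose_countable[OF _ Nm_measurable])
    show "(\<lambda>\<omega>. cocycle (A \<epsilon>) \<theta> n (pullback \<theta>i Nm \<omega>) $ a $ c) \<in> borel_measurable M" for n
      using measurable_compose[OF measurable_pullback borel_measurable_cocycle_entry[OF Suc.prems]] by simp
  qed
  moreover have "(\<lambda>\<omega>. pullback_chain A \<theta> \<theta>i Nm i \<epsilon> (pullback \<theta>i Nm \<omega>) $ c $ b) \<in> borel_measurable M" for c
    using measurable_compose[OF measurable_pullback Suc.IH[OF Suc.prems]] by simp
  ultimately show ?case by (simp add: matrix_matrix_mult_def)
qed (simp add: mat_def)

lemma measurable_pullback_time: "pullback_time \<theta>i Nm i \<in> M \<rightarrow>\<^sub>M count_space UNIV"
proof (induction i)
  case (Suc i)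
  have "(\<lambda>\<omega>. n + pullback_time \<theta>i Nm i (pullback \<theta>i Nm \<omega>)) \<in> M \<rightarrow>\<^sub>M count_space UNIV" for n
    using measurable_compose[OF measurable_pullback Suc.IH] by (rule measurable_compose) simp
  thus ?case
    using measurable_compose_countable[OF _ Nm_measurable,
        of "\<lambda>n \<omega>. n + pullback_time \<theta>i Nm i (pullback \<theta>i Nm \<omega>)"] by simp
qed simp

text \<open>Restricting to rational \<epsilon> keeps these sets measurable.\<close>
definition uniform_set :: "nat \<Rightarrow> nat \<Rightarrow> 'a set" where
  "uniform_set l k = {\<omega>\<in>space M. pullback_time \<theta>i Nm (Suc l) \<omega> \<le> k \<and>
     (\<forall>q::rat. 0 \<le> q \<and> of_rat q \<le> 1 / real k \<longrightarrow> (\<forall>j j'.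
        disagreement (pullback_chain A \<theta> \<theta>i Nm (Suc l) (of_rat q) \<omega>) (e_vec j) (e_vec j')
          \<ge> of_rat q ^ l / real k))}"

lemma sets_uniform_set: "uniform_set l k \<in> sets M"
proof -
  have "Measurable.pred M (\<lambda>\<omega>. pullback_time \<theta>i Nm (Suc l) \<omega> \<le> k)"
    using measurable_compose[OF measurable_pullback_time[of "Suc l"], of "\<lambda>x. x \<le> k" "count_space UNIV"]
    by simp
  moreover have "Measurable.pred M (\<lambda>\<omega>. 0 \<le> q \<and> of_rat q \<le> 1 / real k \<longrightarrow> (\<forall>j j'.
        disagreement (pullback_chain A \<theta> \<theta>i Nm (Suc l) (of_rat q) \<omega>) (e_vec j) (e_vec j')
          \<ge> of_rat q ^ l / real k))" for q :: rat
  proof (cases "0 \<le> q")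
    case True
    hence [measurable]: "(\<lambda>\<omega>. pullback_chain A \<theta> \<theta>i Nm (Suc l) (of_rat q) \<omega> $ a $ b) \<in> borel_measurable M"
      for a b by (intro borel_measurable_pullback_chain_entry) simp
    show ?thesis
      unfolding disagreement_def matrix_vector_mult_e_vec_nth by measurable
  qed simp
  ultimately show ?thesis unfolding uniform_set_def by measurable
qed

lemma uniform_set_mono:
  assumes "0 < k" "k \<le> k'"
  shows "uniform_set l k \<subseteq> uniform_set l k'"
proof
  fix \<omega> assume "\<omega> \<in> uniform_set l k"
  hence \<omega>: "\<omega> \<in> space M" "pullback_time \<theta>i Nm (Suc l) \<omega> \<le> k"
    and bound: "\<And>q j j'. 0 \<le> q \<Longrightarrow> of_rat q \<le> 1 / real k \<Longrightarrow>
      of_rat q ^ l / real k \<le> disagreement (pullback_chain A \<theta> \<theta>i Nm (Suc l) (of_rat q) \<omega>) (e_vec j) (e_vec j')"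
    unfolding uniform_set_def by auto
  have "of_rat q ^ l / real k'
      \<le> disagreement (pullback_chain A \<theta> \<theta>i Nm (Suc l) (of_rat q) \<omega>) (e_vec j) (e_vec j')"
    if "0 \<le> q" "of_rat q \<le> 1 / real k'" for q :: rat and j j'
  proof -
    have "1 / real k' \<le> 1 / real k" using assms by (simp add: frac_le)
    moreover have "of_rat q ^ l / real k' \<le> of_rat q ^ l / real k"
      using that assms by (intro divide_left_mono) auto
    ultimately show ?thesis using bound[of q j j'] that by linarith
  qed
  thus "\<omega> \<in> uniform_set l k'" using \<omega> assms unfolding uniform_set_def by auto
qed

lemma typical_in_uniform_set:
  assumes \<omega>: "typical \<omega>" and l: "1 \<le> l" "l \<le> m"
    and D: "\<omega> \<in> Omega_l M A \<theta> \<theta>i J Nm (l - 1) - Omega_l M A \<theta> \<theta>i J Nm l"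
  shows "\<exists>k>0. \<omega> \<in> uniform_set l k"
proof -
  obtain c d where cd: "c > 0" "d > 0" "\<forall>x\<in>{0..d}. \<forall>j j'.
      disagreement (pullback_chain A \<theta> \<theta>i Nm (Suc l) x \<omega>) (e_vec j) (e_vec j') \<ge> c * x ^ l"
    using pullback_chain_disagreement_ge_power[OF assms] by blast
  obtain k :: nat where k: "max (max (1 / c) (1 / d)) (pullback_time \<theta>i Nm (Suc l) \<omega>) < k"
    using reals_Archimedean2 by blast
  hence k_pos: "0 < k" "1 / k < c" "1 / k < d"
    using cd by (auto simp: field_simps)
  have "(1 / real k) * of_rat q ^ l \<le> c * of_rat q ^ l" if "0 \<le> q" for q :: rat
    using k_pos that by (intro mult_right_mono) auto
  hence bound: "of_rat q ^ l / real k \<le> c * of_rat q ^ l" if "0 \<le> q" for q :: rat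
    using that by simp
  have "\<forall>q::rat. 0 \<le> q \<and> of_rat q \<le> 1 / real k \<longrightarrow> (\<forall>j j'.
      disagreement (pullback_chain A \<theta> \<theta>i Nm (Suc l) (of_rat q) \<omega>) (e_vec j) (e_vec j')
        \<ge> of_rat q ^ l / real k)"
  proof (intro allI impI)
    fix q :: rat and j j' assume q: "0 \<le> q \<and> of_rat q \<le> 1 / real k"
    hence "of_rat q \<in> {0..d}" using k_pos by auto
    hence "c * of_rat q ^ l
        \<le> disagreement (pullback_chain A \<theta> \<theta>i Nm (Suc l) (of_rat q) \<omega>) (e_vec j) (e_vec j')"
      using cd(3) by blast
    thus "of_rat q ^ l / real k
        \<le> disagreement (pullback_chain A \<theta> \<theta>i Nm (Suc l) (of_rat q) \<omega>) (e_vec j) (e_vec j')"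
      using bound[of q] q by linarith
  qed
  thus ?thesis
    using k k_pos typical_space[OF \<omega>] unfolding uniform_set_def by (intro exI[of _ k]) auto
qed

lemma uniform_set_disagreement:
  assumes \<omega>: "typical \<omega>" "\<omega> \<in> uniform_set l k" and \<epsilon>: "\<epsilon> \<in> {0..min (1 / real k) e0}" and k: "0 < k"
  shows "disagreement (pullback_chain A \<theta> \<theta>i Nm (Suc l) \<epsilon> \<omega>) (e_vec j) (e_vec j') \<ge> \<epsilon> ^ l / real k"
proof (rule continuous_le_from_Rats[OF _ _ _ _ \<epsilon>])
  have "continuous_on {0..min (1 / real k) e0} (\<lambda>x. pullback_chain A \<theta> \<theta>i Nm (Suc l) x \<omega>)"
    using Cm_on_continuous[OF Cm_on_pullback_chain[OF \<omega>(1)]] by (rule continuous_on_subset) auto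
  thus "continuous_on {0..min (1 / real k) e0}
      (\<lambda>x. disagreement (pullback_chain A \<theta> \<theta>i Nm (Suc l) x \<omega>) (e_vec j) (e_vec j'))"
    unfolding disagreement_def matrix_vector_mult_e_vec_nth
    by (intro continuous_intros continuous_on_component)
  show "x \<in> {0..min (1 / real k) e0} \<inter> \<rat> \<Longrightarrow>
      x ^ l / real k \<le> disagreement (pullback_chain A \<theta> \<theta>i Nm (Suc l) x \<omega>) (e_vec j) (e_vec j')" for x
    using \<omega>(2) unfolding uniform_set_def by (auto elim!: Rats_cases)
qed (use e0 k in \<open>auto intro!: continuous_intros\<close>)

lemma cocycle_disagreement_ge:
  assumes \<omega>: "typical \<omega>" and n: "(\<theta> ^^ n) \<omega> \<in> uniform_set l k" "k \<le> n" "0 < k"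
    and \<epsilon>: "\<epsilon> \<in> {0..min (1 / real k) e0}" and uv: "u \<in> simplex1" "v \<in> simplex1"
  shows "disagreement (cocycle (A \<epsilon>) \<theta> n \<omega>) u v \<ge> \<epsilon> ^ l / real k"
proof -
  define C where "C = pullback_chain A \<theta> \<theta>i Nm (Suc l) \<epsilon> ((\<theta> ^^ n) \<omega>)"
  define W where "W = cocycle (A \<epsilon>) \<theta> (n - pullback_time \<theta>i Nm (Suc l) ((\<theta> ^^ n) \<omega>)) \<omega>"
  have "pullback_time \<theta>i Nm (Suc l) ((\<theta> ^^ n) \<omega>) \<le> n" using n unfolding uniform_set_def by auto
  hence decomp: "cocycle (A \<epsilon>) \<theta> n \<omega> = C ** W"
    unfolding C_def W_def
    by (intro cocycle_eq_pullback_chain_mult[OF _ _ typical_space[OF \<omega>]])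
       (auto simp: theta_inv_theta theta_space)
  have "col_stochastic W" unfolding W_def using typical_col_stochastic_cocycle[OF \<omega>] \<epsilon> by auto
  hence "W *v u \<in> simplex1" "W *v v \<in> simplex1" using col_stochastic_simplex1 uv by auto
  hence "disagreement C (W *v u) (W *v v) \<ge> \<epsilon> ^ l / real k"
    using uniform_set_disagreement[OF typical_funpow_theta[OF \<omega>] n(1) \<epsilon> n(3)]
    unfolding C_def by (rule disagreement_ge_vertices)
  thus ?thesis unfolding decomp disagreement_def by (simp add: matrix_vector_mul_assoc)
qed

lemma measure_uniform_set_gt:
  assumes l: "1 \<le> l" "l \<le> m" and \<delta>: "0 < \<delta>"
  shows "\<exists>k>0. measure M (Omega_l M A \<theta> \<theta>i J Nm (l - 1) - Omega_l M A \<theta> \<theta>i J Nm l) - \<delta>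
    < measure M (uniform_set l k)"
proof (cases "Omega_l M A \<theta> \<theta>i J Nm (l - 1) - Omega_l M A \<theta> \<theta>i J Nm l \<in> sets M")
  case False
  hence "measure M (Omega_l M A \<theta> \<theta>i J Nm (l - 1) - Omega_l M A \<theta> \<theta>i J Nm l) = 0"
    by (simp add: measure_notin_sets)
  moreover have "0 \<le> measure M (uniform_set l 1)" by simp
  ultimately have "measure M (Omega_l M A \<theta> \<theta>i J Nm (l - 1) - Omega_l M A \<theta> \<theta>i J Nm l) - \<delta>
      < measure M (uniform_set l 1)" using \<delta> by linarith
  thus ?thesis using zero_less_one by blast
next
  case True
  interpret prob_space M by (rule prob_space_M)
  define D where "D = Omega_l M A \<theta> \<theta>i J Nm (l - 1) - Omega_l M A \<theta> \<theta>i J Nm l"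
  obtain N where N: "{\<omega>\<in>space M. \<not> typical \<omega>} \<subseteq> N" "N \<in> null_sets M"
    using AE_E[OF AE_typical] by (metis null_setsI)
  define H where "H k = uniform_set l (Suc k)" for k
  have "D - N \<subseteq> (\<Union>k. H k)"
  proof
    fix \<omega> assume \<omega>: "\<omega> \<in> D - N"
    hence "typical \<omega>" using N(1) unfolding D_def Omega_l_def by blast
    then obtain k where "k > 0" "\<omega> \<in> uniform_set l k"
      using typical_in_uniform_set[OF _ l] \<omega> unfolding D_def by blast
    hence "\<omega> \<in> H (k - 1)" unfolding H_def by simp
    thus "\<omega> \<in> (\<Union>k. H k)" by blast
  qed
  moreover have H: "H k \<in> sets M" for k unfolding H_def by (rule sets_uniform_set)
  ultimately have "measure M (D - N) \<le> measure M (\<Union>k. H k)"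
    by (intro finite_measure_mono) auto
  hence "measure M D - \<delta> < measure M (\<Union>k. H k)"
    using measure_Diff_null_set[OF True[folded D_def] N(2)] \<delta> by simp
  moreover have "(\<lambda>k. measure M (H k)) \<longlonglongrightarrow> measure M (\<Union>k. H k)"
    using H uniform_set_mono by (intro finite_Lim_measure_incseq) (auto simp: H_def incseq_def)
  ultimately have "eventually (\<lambda>k. measure M D - \<delta> < measure M (H k)) sequentially"
    by (simp add: order_tendstoD(1))
  then obtain k where "measure M D - \<delta> < measure M (uniform_set l (Suc k))"
    by (auto simp: eventually_sequentially H_def)
  thus ?thesis unfolding D_def using zero_less_Suc by blast
qed

theorem visit_times_disagreement_lower_bound:
  assumes l: "1 \<le> l" "l \<le> m" and \<delta>: "0 < \<delta>"
  shows "\<exists>\<epsilon>\<delta>>0. \<exists>c\<delta>>0. \<exists>F :: 'a \<Rightarrow> nat set. AE \<omega> in M.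
           liminf (\<lambda>n. ereal (real (card (F \<omega> \<inter> {1..n})) / real n))
             > ereal (measure M (Omega_l M A \<theta> \<theta>i J Nm (l - 1) - Omega_l M A \<theta> \<theta>i J Nm l) - \<delta>)
         \<and> (\<forall>\<epsilon>. 0 \<le> \<epsilon> \<and> \<epsilon> < \<epsilon>\<delta> \<longrightarrow>
              (\<forall>u\<in>simplex1. \<forall>v\<in>simplex1. \<forall>n\<in>F \<omega>. disagreement (cocycle (A \<epsilon>) \<theta> n \<omega>) u v \<ge> \<epsilon> ^ l * c\<delta>))"
proof -
  define \<mu>D where "\<mu>D = measure M (Omega_l M A \<theta> \<theta>i J Nm (l - 1) - Omega_l M A \<theta> \<theta>i J Nm l)"
  obtain k where k: "0 < k" "\<mu>D - \<delta> < measure M (uniform_set l k)"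
    using measure_uniform_set_gt[OF l \<delta>] unfolding \<mu>D_def by blast
  define r where "r = (\<mu>D - \<delta> + measure M (uniform_set l k)) / 2"
  have r: "\<mu>D - \<delta> < r" "r < measure M (uniform_set l k)" using k unfolding r_def by auto
  define F where "F \<omega> = {n. k \<le> n \<and> (\<theta> ^^ n) \<omega> \<in> uniform_set l k}" for \<omega>
  have "AE \<omega> in M. \<exists>N. \<forall>n\<ge>N. r * n \<le> visits \<theta> (uniform_set l k) n \<omega>"
    by (rule AE_visits_lower_density[OF prob_space_M measurable_theta distr_theta theta_ergodic
          sets_uniform_set r(2)])
  hence "AE \<omega> in M. ereal (\<mu>D - \<delta>) < liminf (\<lambda>n. ereal (real (card (F \<omega> \<inter> {1..n})) / real n))
      \<and> (\<forall>\<epsilon>. 0 \<le> \<epsilon> \<and> \<epsilon> < min (1 / real k) e0 \<longrightarrow> (\<forall>u\<in>simplex1. \<forall>v\<in>simplex1. \<forall>n\<in>F \<omega>.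
            disagreement (cocycle (A \<epsilon>) \<theta> n \<omega>) u v \<ge> \<epsilon> ^ l * (1 / real k)))"
    using AE_typical
  proof eventually_elim
    case (elim \<omega>)
    then obtain N where "\<And>n. n \<ge> N \<Longrightarrow> r * real n \<le> card {j. j < n \<and> (\<theta> ^^ j) \<omega> \<in> uniform_set l k}"
      by (auto simp: visits_eq_card)
    hence upper: "ereal ((\<mu>D - \<delta> + r) / 2) \<le> liminf (\<lambda>n. ereal (real (card (F \<omega> \<inter> {1..n})) / real n))"
      unfolding F_def using r(1) k(1) by (intro liminf_density_ge) auto
    have "ereal (\<mu>D - \<delta>) < ereal ((\<mu>D - \<delta> + r) / 2)" using r by simp
    hence density: "ereal (\<mu>D - \<delta>) < liminf (\<lambda>n. ereal (real (card (F \<omega> \<inter> {1..n})) / real n))"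
      using upper by (rule order_less_le_trans)
    show ?case
    proof (intro conjI density allI impI ballI)
      fix \<epsilon> :: real and u v :: "real^'k" and n :: nat assume "0 \<le> \<epsilon> \<and> \<epsilon> < min (1 / real k) e0" "u \<in> simplex1" "v \<in> simplex1" "n \<in> F \<omega>"
      thus "disagreement (cocycle (A \<epsilon>) \<theta> n \<omega>) u v \<ge> \<epsilon> ^ l * (1 / real k)"
        using cocycle_disagreement_ge[OF elim(2), of n l k \<epsilon> u v] k(1) unfolding F_def by auto
    qed
  qed
  moreover have "0 < min (1 / real k) e0" "0 < 1 / real k" using k(1) e0 by auto
  ultimately show ?thesis unfolding \<mu>D_def by blast
qed

end

theorem lemma5p2:
  fixes M :: "'a measure" and \<theta> \<theta>i :: "'a \<Rightarrow> 'a"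
    and A :: "real \<Rightarrow> 'a \<Rightarrow> real ^'k::finite ^'k"
    and J :: "'a \<Rightarrow> 'k" and Nm :: "'a \<Rightarrow> nat"
    and m l :: nat and \<delta> :: real
  assumes card_k: "CARD('k) \<ge> 2"
    and mds: "invertible_mds M \<theta> \<theta>i"
    and sync: "synchronized M \<theta> (A 0)"
    and J_meas: "J \<in> M \<rightarrow>\<^sub>M count_space UNIV"
    and Nm_meas: "Nm \<in> M \<rightarrow>\<^sub>M count_space UNIV"
    and J_prop: "AE \<omega> in M. \<forall>n. cocycle (A 0) \<theta> n \<omega> *v e_vec (J \<omega>) = e_vec (J ((\<theta> ^^ n) \<omega>))"
    and Nm_prop: "AE \<omega> in M. \<forall>n j. n \<ge> Nm \<omega> \<longrightarrow>
                     cocycle (A 0) \<theta> n ((\<theta>i ^^ n) \<omega>) *v e_vec j = e_vec (J \<omega>)"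
    and pert: "Cm_markov_perturbation m M A"
    and m_pos: "m \<ge> 1"
    and l_range: "1 \<le> l" "l \<le> m"
    and pos: "measure M (Omega_l M A \<theta> \<theta>i J Nm (l - 1) - Omega_l M A \<theta> \<theta>i J Nm l) > 0"
    and \<delta>_range: "0 < \<delta>" "\<delta> < measure M (Omega_l M A \<theta> \<theta>i J Nm (l - 1) - Omega_l M A \<theta> \<theta>i J Nm l)"
  shows "\<exists>\<epsilon>\<delta>>0. \<exists>c\<delta>>0. \<exists>F :: 'a \<Rightarrow> nat set. AE \<omega> in M.
           liminf (\<lambda>n. ereal (real (card (F \<omega> \<inter> {1..n})) / real n))
             > ereal (measure M (Omega_l M A \<theta> \<theta>i J Nm (l - 1) - Omega_l M A \<theta> \<theta>i J Nm l) - \<delta>)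
         \<and> (\<forall>\<epsilon>. 0 \<le> \<epsilon> \<and> \<epsilon> < \<epsilon>\<delta> \<longrightarrow>
              (\<forall>u\<in>simplex1. \<forall>v\<in>simplex1. \<forall>n\<in>F \<omega>.
                 1 - (\<Sum>i\<in>UNIV. (cocycle (A \<epsilon>) \<theta> n \<omega> *v u) $ i * (cocycle (A \<epsilon>) \<theta> n \<omega> *v v) $ i)
                   \<ge> \<epsilon> ^ l * c\<delta>))"
proof -
  obtain e0 where e0: "e0 > 0" "AE \<omega> in M. Cm_on m (\<lambda>\<epsilon>. A \<epsilon> \<omega>) {0..e0}"
    using pert unfolding Cm_markov_perturbation_def by blast
  have MRN: "\<And>\<epsilon>. \<epsilon> \<ge> 0 \<Longrightarrow> MRN M (A \<epsilon>)"
    using pert unfolding Cm_markov_perturbation_def markov_perturbation_def by blast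
  interpret perturbed_sync M \<theta> \<theta>i A J Nm m e0
    by (rule perturbed_sync.intro[OF mds Nm_prop MRN e0 Nm_meas])
  show ?thesis
    using visit_times_disagreement_lower_bound[OF l_range \<delta>_range(1)]
    unfolding disagreement_def .
qed
end
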